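(* Let $R$ be a commutative Noetherian local ring and $M$ any finitely generated $R$-module, with syzygy $\Omega M$. Then $M\oplus\Omega M\in\mathcal E(R)$, i.e. $\underline{\mathrm{ann}}_R(M\oplus\Omega M)=\mathrm{ARann}_R(M\oplus\Omega M)$.
   Context: All modules are finitely generated. $\Omega M$ is the kernel of a surjection from a free module onto $M$ (defined up to free summands). $\underline{\mathrm{ann}}_R(M)=\mathrm{ann}_R\underline{\mathrm{End}}_R(M)$, where $\underline{\mathrm{End}}_R(M)$ is $\mathrm{End}_R(M)$ modulo endomorphisms factoring through a free module. $\mathrm{ARann}_R(M)=\bigcap_{i>0}\mathrm{ann}_R\mathrm{Ext}^i_R(M,M\oplus R)$. $\mathcal{E}(R)$ is the full subcategory of modules $M$ with $\underline{\mathrm{ann}}_R(M)=\mathrm{ARann}_R(M)$. *)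

theory Defs
  imports "HOL-Algebra.Module" "HOL-Algebra.Ideal"
begin

definition noetherian_ring :: "'a ring \<Rightarrow> bool" where
  "noetherian_ring R \<longleftrightarrow> cring R \<and>
     (\<forall>I. ideal I R \<longrightarrow> (\<exists>S. finite S \<and> S \<subseteq> carrier R \<and> I = Idl\<^bsub>R\<^esub> S))"

definition local_ring :: "'a ring \<Rightarrow> bool" where
  "local_ring R \<longleftrightarrow> cring R \<and> (\<exists>!I. maximalideal I R)"

definition mod_hom :: "'a ring \<Rightarrow> ('a, 'b) module \<Rightarrow> ('a, 'c) module \<Rightarrow> ('b \<Rightarrow> 'c) set" where
  "mod_hom R M N = {f. f \<in> carrier M \<rightarrow> carrier N \<and>
     (\<forall>x\<in>carrier M. \<forall>y\<in>carrier M. f (x \<oplus>\<^bsub>M\<^esub> y) = f x \<oplus>\<^bsub>N\<^esub> f y) \<and>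
     (\<forall>a\<in>carrier R. \<forall>x\<in>carrier M. f (a \<odot>\<^bsub>M\<^esub> x) = a \<odot>\<^bsub>N\<^esub> f x)}"

text \<open>The free module R^n (vectors indexed by {0..<n}, padded with zeros).\<close>
definition free_mod :: "'a ring \<Rightarrow> nat \<Rightarrow> ('a, nat \<Rightarrow> 'a) module" where
  "free_mod R n = \<lparr> carrier = {v. (\<forall>i<n. v i \<in> carrier R) \<and> (\<forall>i. n \<le> i \<longrightarrow> v i = \<zero>\<^bsub>R\<^esub>)},
     mult = (\<lambda>v w. undefined), one = undefined,
     zero = (\<lambda>i. \<zero>\<^bsub>R\<^esub>), add = (\<lambda>v w i. v i \<oplus>\<^bsub>R\<^esub> w i),
     smult = (\<lambda>a v i. a \<otimes>\<^bsub>R\<^esub> v i) \<rparr>"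

definition self_mod :: "'a ring \<Rightarrow> ('a, 'a) module" where
  "self_mod R = \<lparr> carrier = carrier R, mult = monoid.mult R, one = one R,
     zero = zero R, add = add R, smult = monoid.mult R \<rparr>"

definition dsum :: "('a, 'b) module \<Rightarrow> ('a, 'c) module \<Rightarrow> ('a, 'b \<times> 'c) module" where
  "dsum M N = \<lparr> carrier = carrier M \<times> carrier N,
     mult = (\<lambda>x y. undefined), one = undefined,
     zero = (\<zero>\<^bsub>M\<^esub>, \<zero>\<^bsub>N\<^esub>),
     add = (\<lambda>x y. (fst x \<oplus>\<^bsub>M\<^esub> fst y, snd x \<oplus>\<^bsub>N\<^esub> snd y)),
     smult = (\<lambda>a x. (a \<odot>\<^bsub>M\<^esub> fst x, a \<odot>\<^bsub>N\<^esub> snd x)) \<rparr>"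

definition mod_kernel :: "('a, 'b) module \<Rightarrow> ('a, 'c) module \<Rightarrow> ('b \<Rightarrow> 'c) \<Rightarrow> 'b set" where
  "mod_kernel M N f = {x \<in> carrier M. f x = \<zero>\<^bsub>N\<^esub>}"

definition submod :: "('a, 'b) module \<Rightarrow> 'b set \<Rightarrow> ('a, 'b) module" where
  "submod M K = M\<lparr>carrier := K\<rparr>"

text \<open>ann of the stable endomorphism module: r such that r*phi factors through
  a (finitely generated) free module, for every endomorphism phi.\<close>
definition stable_ann :: "'a ring \<Rightarrow> ('a, 'b) module \<Rightarrow> 'a set" where
  "stable_ann R X = {r \<in> carrier R. \<forall>\<phi> \<in> mod_hom R X X.
     \<exists>n g h. g \<in> mod_hom R X (free_mod R n) \<and> h \<in> mod_hom R (free_mod R n) X \<and>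
       (\<forall>x\<in>carrier X. h (g x) = r \<odot>\<^bsub>X\<^esub> \<phi> x)}"

text \<open>A free resolution  ... -> F_2 -d_2-> F_1 -d_1-> F_0 -eps-> X -> 0
  with F_i = R^(n i).\<close>
definition free_resolution ::
  "'a ring \<Rightarrow> ('a, 'b) module \<Rightarrow> (nat \<Rightarrow> nat) \<Rightarrow> ((nat \<Rightarrow> 'a) \<Rightarrow> 'b)
     \<Rightarrow> (nat \<Rightarrow> (nat \<Rightarrow> 'a) \<Rightarrow> (nat \<Rightarrow> 'a)) \<Rightarrow> bool" where
  "free_resolution R X n \<epsilon> d \<longleftrightarrow>
     \<epsilon> \<in> mod_hom R (free_mod R (n 0)) X \<and>
     \<epsilon> ` carrier (free_mod R (n 0)) = carrier X \<and>
     (\<forall>i. d (Suc i) \<in> mod_hom R (free_mod R (n (Suc i))) (free_mod R (n i))) \<and>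
     mod_kernel (free_mod R (n 0)) X \<epsilon> = d 1 ` carrier (free_mod R (n 1)) \<and>
     (\<forall>i. mod_kernel (free_mod R (n (Suc i))) (free_mod R (n i)) (d (Suc i))
            = d (Suc (Suc i)) ` carrier (free_mod R (n (Suc (Suc i)))))"

text \<open>ann_R Ext^i_R(X,N), computed as cohomology of Hom(F_*, N): r annihilates
  Ext^i iff r times every i-cocycle is an i-coboundary (for any free resolution).\<close>
definition ext_ann :: "'a ring \<Rightarrow> ('a, 'b) module \<Rightarrow> ('a, 'c) module \<Rightarrow> nat \<Rightarrow> 'a set" where
  "ext_ann R X N i = {r \<in> carrier R. \<forall>n \<epsilon> d. free_resolution R X n \<epsilon> d \<longrightarrow>
     (\<forall>f \<in> mod_hom R (free_mod R (n i)) N.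
        (\<forall>y\<in>carrier (free_mod R (n (Suc i))). f (d (Suc i) y) = \<zero>\<^bsub>N\<^esub>) \<longrightarrow>
        (if i = 0 then (\<forall>x\<in>carrier (free_mod R (n i)). r \<odot>\<^bsub>N\<^esub> f x = \<zero>\<^bsub>N\<^esub>)
         else (\<exists>g \<in> mod_hom R (free_mod R (n (i - 1))) N.
                 \<forall>x\<in>carrier (free_mod R (n i)). r \<odot>\<^bsub>N\<^esub> f x = g (d i x))))}"

definition AR_ann :: "'a ring \<Rightarrow> ('a, 'b) module \<Rightarrow> 'a set" where
  "AR_ann R X = carrier R \<inter> (\<Inter>i\<in>{i. 0 < i}. ext_ann R X (dsum X (self_mod R)) i)"

end

theory Submission
  imports Defs
begin

(*
  If r\<cdot>id_X factors through a free module, then multiplying a free resolution of X by r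
  is null-homotopic, so r kills Ext^i(X, -) for i > 0; this gives stable_ann \<subseteq> AR_ann for
  every module X.

  For the converse take X = M \<oplus> \<Omega>M with \<Omega>M = K = ker (\<pi> : R^n \<rightarrow> M), and cover X by
  R^n \<oplus> R^m \<rightarrow> M \<oplus> K, so that K \<subseteq> R^n lies in the first syzygy of X.  If r kills
  Ext^1(X, X \<oplus> R), then r times the projection of that syzygy onto its K-coordinate extends
  to the cover; restricted to R^n this is a map t : R^n \<rightarrow> K that equals r on K.  Hence
  r\<cdot>id_K = t \<circ> (K \<subseteq> R^n), and r - t vanishes on K, so it descends to s : M \<rightarrow> R^n with
  \<pi> \<circ> s = r\<cdot>id_M.  Thus r\<cdot>id_X factors through a free module.  Noetherianity is only used
  to present K and to build the free resolution of X.
*)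

section \<open>Module homomorphisms\<close>

lemma mod_homI:
  assumes "\<And>x. x \<in> carrier A \<Longrightarrow> f x \<in> carrier B"
    and "\<And>x y. x \<in> carrier A \<Longrightarrow> y \<in> carrier A \<Longrightarrow> f (x \<oplus>\<^bsub>A\<^esub> y) = f x \<oplus>\<^bsub>B\<^esub> f y"
    and "\<And>a x. a \<in> carrier R \<Longrightarrow> x \<in> carrier A \<Longrightarrow> f (a \<odot>\<^bsub>A\<^esub> x) = a \<odot>\<^bsub>B\<^esub> f x"
  shows "f \<in> mod_hom R A B"
  using assms unfolding mod_hom_def by auto

lemma mod_hom_closed: "f \<in> mod_hom R A B \<Longrightarrow> x \<in> carrier A \<Longrightarrow> f x \<in> carrier B"
  unfolding mod_hom_def by auto

lemma mod_hom_add: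
  "f \<in> mod_hom R A B \<Longrightarrow> x \<in> carrier A \<Longrightarrow> y \<in> carrier A \<Longrightarrow> f (x \<oplus>\<^bsub>A\<^esub> y) = f x \<oplus>\<^bsub>B\<^esub> f y"
  unfolding mod_hom_def by auto

lemma mod_hom_smult:
  "f \<in> mod_hom R A B \<Longrightarrow> a \<in> carrier R \<Longrightarrow> x \<in> carrier A \<Longrightarrow> f (a \<odot>\<^bsub>A\<^esub> x) = a \<odot>\<^bsub>B\<^esub> f x"
  unfolding mod_hom_def by auto

lemma mod_hom_id: "(\<lambda>x. x) \<in> mod_hom R A A"
  by (rule mod_homI) auto

lemma mod_hom_comp: "f \<in> mod_hom R A B \<Longrightarrow> g \<in> mod_hom R B C \<Longrightarrow> (\<lambda>x. g (f x)) \<in> mod_hom R A C"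
  unfolding mod_hom_def by (auto simp: Pi_def)

context
  fixes R :: "'a ring" and A :: "('a, 'b) module" and B :: "('a, 'd) module"
  assumes A: "module R A" and B: "module R B"
begin

interpretation A: module R A by (rule A)
interpretation B: module R B by (rule B)

lemma mod_hom_zero: "f \<in> mod_hom R A B \<Longrightarrow> f \<zero>\<^bsub>A\<^esub> = \<zero>\<^bsub>B\<^esub>"
  using mod_hom_smult[of f R A B "\<zero>\<^bsub>R\<^esub>" "\<zero>\<^bsub>A\<^esub>"] mod_hom_closed[of f R A B] by simp

lemma mod_hom_neg:
  assumes f: "f \<in> mod_hom R A B" and x: "x \<in> carrier A"
  shows "f (\<ominus>\<^bsub>A\<^esub> x) = \<ominus>\<^bsub>B\<^esub> f x"
  using mod_hom_smult[OF f _ x, of "\<ominus>\<^bsub>R\<^esub> \<one>\<^bsub>R\<^esub>"] mod_hom_closed[OF f x] x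
  by (simp add: A.smult_l_minus B.smult_l_minus)

lemma mod_hom_minus:
  assumes f: "f \<in> mod_hom R A B" and x: "x \<in> carrier A" and y: "y \<in> carrier A"
  shows "f (x \<ominus>\<^bsub>A\<^esub> y) = f x \<ominus>\<^bsub>B\<^esub> f y"
  using x y by (simp add: A.minus_eq B.minus_eq mod_hom_add[OF f] mod_hom_neg[OF f])

lemma mod_kernel_submodule:
  assumes f: "f \<in> mod_hom R A B"
  shows "submodule (mod_kernel A B f) R A"
  by (rule A.submoduleI)
    (use mod_hom_closed[OF f] in \<open>auto simp: mod_kernel_def mod_hom_zero[OF f] mod_hom_add[OF f]
       mod_hom_smult[OF f] a_inv_def[symmetric] mod_hom_neg[OF f]\<close>)

end

context
  fixes R :: "'a ring" and B :: "('a, 'd) module"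
  assumes B: "module R B"
begin

interpretation B: module R B by (rule B)

lemma mod_hom_pointwise_add:
  assumes f: "f \<in> mod_hom R C B" and g: "g \<in> mod_hom R C B"
  shows "(\<lambda>x. f x \<oplus>\<^bsub>B\<^esub> g x) \<in> mod_hom R C B"
proof (rule mod_homI)
  fix x y assume "x \<in> carrier C" "y \<in> carrier C"
  then show "f (x \<oplus>\<^bsub>C\<^esub> y) \<oplus>\<^bsub>B\<^esub> g (x \<oplus>\<^bsub>C\<^esub> y) = f x \<oplus>\<^bsub>B\<^esub> g x \<oplus>\<^bsub>B\<^esub> (f y \<oplus>\<^bsub>B\<^esub> g y)"
    using mod_hom_closed[OF f] mod_hom_closed[OF g]
    by (simp add: mod_hom_add[OF f] mod_hom_add[OF g] B.a_ac)
qed (use mod_hom_closed[OF f] mod_hom_closed[OF g]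
     in \<open>simp_all add: mod_hom_smult[OF f] mod_hom_smult[OF g] B.smult_r_distr\<close>)

lemma mod_hom_pointwise_diff:
  assumes f: "f \<in> mod_hom R C B" and g: "g \<in> mod_hom R C B"
  shows "(\<lambda>x. f x \<ominus>\<^bsub>B\<^esub> g x) \<in> mod_hom R C B"
proof (rule mod_homI)
  fix x y assume "x \<in> carrier C" "y \<in> carrier C"
  then show "f (x \<oplus>\<^bsub>C\<^esub> y) \<ominus>\<^bsub>B\<^esub> g (x \<oplus>\<^bsub>C\<^esub> y) = (f x \<ominus>\<^bsub>B\<^esub> g x) \<oplus>\<^bsub>B\<^esub> (f y \<ominus>\<^bsub>B\<^esub> g y)"
    using mod_hom_closed[OF f] mod_hom_closed[OF g]
    by (simp add: mod_hom_add[OF f] mod_hom_add[OF g] B.minus_eq B.minus_add B.a_ac)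
next
  fix a x assume "a \<in> carrier R" "x \<in> carrier C"
  then show "f (a \<odot>\<^bsub>C\<^esub> x) \<ominus>\<^bsub>B\<^esub> g (a \<odot>\<^bsub>C\<^esub> x) = a \<odot>\<^bsub>B\<^esub> (f x \<ominus>\<^bsub>B\<^esub> g x)"
    using mod_hom_closed[OF f] mod_hom_closed[OF g]
    by (simp add: mod_hom_smult[OF f] mod_hom_smult[OF g] B.minus_eq B.smult_r_distr B.smult_r_minus)
qed (use mod_hom_closed[OF f] mod_hom_closed[OF g] in simp)

lemma mod_hom_scale:
  assumes f: "f \<in> mod_hom R C B" and r: "r \<in> carrier R"
  shows "(\<lambda>x. r \<odot>\<^bsub>B\<^esub> f x) \<in> mod_hom R C B"
proof (rule mod_homI)
  fix a x assume a: "a \<in> carrier R" and x: "x \<in> carrier C"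
  have "r \<odot>\<^bsub>B\<^esub> (a \<odot>\<^bsub>B\<^esub> f x) = a \<odot>\<^bsub>B\<^esub> (r \<odot>\<^bsub>B\<^esub> f x)"
    using a r mod_hom_closed[OF f x] by (simp add: B.smult_assoc1[symmetric] B.R.m_comm)
  then show "r \<odot>\<^bsub>B\<^esub> f (a \<odot>\<^bsub>C\<^esub> x) = a \<odot>\<^bsub>B\<^esub> (r \<odot>\<^bsub>B\<^esub> f x)"
    using mod_hom_smult[OF f a x] by simp
qed (use r mod_hom_closed[OF f] in \<open>simp_all add: mod_hom_add[OF f] B.smult_r_distr\<close>)

end

lemma dsum_simps [simp]:
  "carrier (dsum A B) = carrier A \<times> carrier B" "\<zero>\<^bsub>dsum A B\<^esub> = (\<zero>\<^bsub>A\<^esub>, \<zero>\<^bsub>B\<^esub>)"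
  "x \<oplus>\<^bsub>dsum A B\<^esub> y = (fst x \<oplus>\<^bsub>A\<^esub> fst y, snd x \<oplus>\<^bsub>B\<^esub> snd y)"
  "a \<odot>\<^bsub>dsum A B\<^esub> x = (a \<odot>\<^bsub>A\<^esub> fst x, a \<odot>\<^bsub>B\<^esub> snd x)"
  by (simp_all add: dsum_def)

lemma submod_simps [simp]:
  "carrier (submod M K) = K" "\<zero>\<^bsub>submod M K\<^esub> = \<zero>\<^bsub>M\<^esub>"
  "x \<oplus>\<^bsub>submod M K\<^esub> y = x \<oplus>\<^bsub>M\<^esub> y" "a \<odot>\<^bsub>submod M K\<^esub> x = a \<odot>\<^bsub>M\<^esub> x"
  by (simp_all add: submod_def)

lemma self_mod_simps [simp]:
  "carrier (self_mod R) = carrier R" "\<zero>\<^bsub>self_mod R\<^esub> = \<zero>\<^bsub>R\<^esub>"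
  "x \<oplus>\<^bsub>self_mod R\<^esub> y = x \<oplus>\<^bsub>R\<^esub> y" "a \<odot>\<^bsub>self_mod R\<^esub> x = a \<otimes>\<^bsub>R\<^esub> x"
  by (simp_all add: self_mod_def)

lemma module_dsum:
  assumes A: "module R A" and B: "module R B"
  shows "module R (dsum A B)"
proof -
  interpret A: module R A by fact
  interpret B: module R B by fact
  show ?thesis
  proof (rule moduleI)
    show "abelian_group (dsum A B)"
    proof (rule abelian_groupI)
      fix x assume "x \<in> carrier (dsum A B)"
      then show "\<exists>y\<in>carrier (dsum A B). y \<oplus>\<^bsub>dsum A B\<^esub> x = \<zero>\<^bsub>dsum A B\<^esub>"
        by (intro bexI[of _ "(\<ominus>\<^bsub>A\<^esub> fst x, \<ominus>\<^bsub>B\<^esub> snd x)"]) (auto simp: A.l_neg B.l_neg)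
    qed (auto simp: A.a_ac B.a_ac)
  qed (auto simp: A.is_cring A.smult_l_distr B.smult_l_distr A.smult_r_distr B.smult_r_distr
      A.smult_assoc1 B.smult_assoc1)
qed

lemma module_self_mod:
  fixes R (structure)
  assumes "cring R" shows "module R (self_mod R)"
proof -
  interpret cring R by fact
  show ?thesis
  proof (rule moduleI)
    show "abelian_group (self_mod R)"
    proof (rule abelian_groupI)
      fix x assume "x \<in> carrier (self_mod R)"
      then show "\<exists>y\<in>carrier (self_mod R). y \<oplus>\<^bsub>self_mod R\<^esub> x = \<zero>\<^bsub>self_mod R\<^esub>"
        by (intro bexI[of _ "\<ominus> x"]) (auto simp: l_neg)
    qed (auto simp: a_ac)
  qed (auto simp: is_cring l_distr r_distr m_assoc)
qed

lemma module_submod: "module R M \<Longrightarrow> submodule K R M \<Longrightarrow> module R (submod M K)"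
  unfolding submod_def by (rule submodule.submodule_is_module)

lemma mod_hom_pair:
  "f \<in> mod_hom R A B \<Longrightarrow> g \<in> mod_hom R A C \<Longrightarrow> (\<lambda>x. (f x, g x)) \<in> mod_hom R A (dsum B C)"
  unfolding mod_hom_def by auto

lemma mod_hom_fst: "fst \<in> mod_hom R (dsum A B) A"
  by (rule mod_homI) auto

lemma mod_hom_snd: "snd \<in> mod_hom R (dsum A B) B"
  by (rule mod_homI) auto

lemma mod_hom_into_submod:
  "f \<in> mod_hom R A M \<Longrightarrow> (\<And>x. x \<in> carrier A \<Longrightarrow> f x \<in> K) \<Longrightarrow> f \<in> mod_hom R A (submod M K)"
  unfolding mod_hom_def by auto

lemma mod_hom_restrict_submod:
  "f \<in> mod_hom R M N \<Longrightarrow> K \<subseteq> carrier M \<Longrightarrow> f \<in> mod_hom R (submod M K) N"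
  unfolding mod_hom_def by (auto simp: subset_iff)

lemma mod_hom_image_submodule:
  assumes A: "module R A" and B: "module R B" and f: "f \<in> mod_hom R A B"
  shows "submodule (f ` carrier A) R B"
proof -
  interpret A: module R A by fact
  interpret B: module R B by fact
  show ?thesis
  proof (rule B.submoduleI)
    show "\<zero>\<^bsub>B\<^esub> \<in> f ` carrier A"
      using mod_hom_zero[OF A B f] by (metis A.zero_closed imageI)
  qed (use mod_hom_closed[OF f] in \<open>auto simp: mod_hom_neg[OF A B f, symmetric]
      mod_hom_add[OF f, symmetric] mod_hom_smult[OF f, symmetric]\<close>)
qed

lemma mod_hom_const_zero:
  assumes "module R B" shows "(\<lambda>x. \<zero>\<^bsub>B\<^esub>) \<in> mod_hom R A B"
proof -
  interpret B: module R B by fact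
  show ?thesis by (rule mod_homI) simp_all
qed

lemma mod_hom_factor_surj:
  assumes A: "module R A" and B: "module R B" and C: "module R C"
    and \<pi>: "\<pi> \<in> mod_hom R A B" and onto: "\<pi> ` carrier A = carrier B" and \<phi>: "\<phi> \<in> mod_hom R A C"
    and vanish: "\<And>u. u \<in> carrier A \<Longrightarrow> \<pi> u = \<zero>\<^bsub>B\<^esub> \<Longrightarrow> \<phi> u = \<zero>\<^bsub>C\<^esub>"
  shows "\<exists>\<psi>\<in>mod_hom R B C. \<forall>u\<in>carrier A. \<psi> (\<pi> u) = \<phi> u"
proof -
  interpret A: module R A by (rule A)
  interpret B: module R B by (rule B)
  interpret C: module R C by (rule C)
  define \<psi> where "\<psi> y = \<phi> (SOME u. u \<in> carrier A \<and> \<pi> u = y)" for y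
  have \<psi>\<pi>: "\<psi> (\<pi> u) = \<phi> u" if u: "u \<in> carrier A" for u
  proof -
    obtain u' where u': "u' \<in> carrier A" "\<pi> u' = \<pi> u" "\<psi> (\<pi> u) = \<phi> u'"
      using someI[of "\<lambda>u'. u' \<in> carrier A \<and> \<pi> u' = \<pi> u", OF conjI[OF u refl]] by (auto simp: \<psi>_def)
    have "\<pi> (u' \<ominus>\<^bsub>A\<^esub> u) = \<zero>\<^bsub>B\<^esub>"
      using u u' mod_hom_closed[OF \<pi> u] by (simp add: mod_hom_minus[OF A B \<pi>] B.r_neg B.minus_eq)
    then have "\<phi> u' \<ominus>\<^bsub>C\<^esub> \<phi> u = \<zero>\<^bsub>C\<^esub>"
      using vanish[OF A.minus_closed[OF u'(1) u]] mod_hom_minus[OF A C \<phi> u'(1) u] by simp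
    moreover have "\<phi> u' = (\<phi> u' \<ominus>\<^bsub>C\<^esub> \<phi> u) \<oplus>\<^bsub>C\<^esub> \<phi> u"
      using mod_hom_closed[OF \<phi>] u u'(1) by (simp add: C.minus_eq C.a_assoc C.l_neg)
    ultimately show ?thesis using u'(3) mod_hom_closed[OF \<phi> u] by simp
  qed
  have lift: "\<exists>u\<in>carrier A. y = \<pi> u" if "y \<in> carrier B" for y
    using that onto by auto
  have "\<psi> \<in> mod_hom R B C"
  proof (rule mod_homI)
    fix y assume "y \<in> carrier B"
    then obtain u where "u \<in> carrier A" "y = \<pi> u" using lift by blast
    then show "\<psi> y \<in> carrier C" using \<psi>\<pi> mod_hom_closed[OF \<phi>] by simp
  next
    fix y y' assume "y \<in> carrier B" "y' \<in> carrier B"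
    then obtain u u' where "u \<in> carrier A" "u' \<in> carrier A" "y = \<pi> u" "y' = \<pi> u'" using lift by blast
    then show "\<psi> (y \<oplus>\<^bsub>B\<^esub> y') = \<psi> y \<oplus>\<^bsub>C\<^esub> \<psi> y'"
      by (simp add: mod_hom_add[OF \<pi>, symmetric] mod_hom_add[OF \<phi>] \<psi>\<pi>)
  next
    fix a y assume "a \<in> carrier R" "y \<in> carrier B"
    then obtain u where "a \<in> carrier R" "u \<in> carrier A" "y = \<pi> u" using lift by blast
    then show "\<psi> (a \<odot>\<^bsub>B\<^esub> y) = a \<odot>\<^bsub>C\<^esub> \<psi> y"
      by (simp add: mod_hom_smult[OF \<pi>, symmetric] mod_hom_smult[OF \<phi>] \<psi>\<pi>)
  qed
  with \<psi>\<pi> show ?thesis by blast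
qed

section \<open>The stable annihilator\<close>

definition factors_through_free :: "'a ring \<Rightarrow> ('a, 'b) module \<Rightarrow> ('a, 'c) module \<Rightarrow> ('b \<Rightarrow> 'c) \<Rightarrow> bool" where
  "factors_through_free R A B f \<longleftrightarrow> (\<exists>n g h. g \<in> mod_hom R A (free_mod R n) \<and>
     h \<in> mod_hom R (free_mod R n) B \<and> (\<forall>x\<in>carrier A. h (g x) = f x))"

lemma factors_through_free_comp:
  assumes "factors_through_free R A B f" and "\<phi> \<in> mod_hom R B C"
  shows "factors_through_free R A C (\<lambda>x. \<phi> (f x))"
proof -
  obtain n g h where "g \<in> mod_hom R A (free_mod R n)" "h \<in> mod_hom R (free_mod R n) B"
    "\<forall>x\<in>carrier A. h (g x) = f x"
    using assms(1) unfolding factors_through_free_def by blast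
  then show ?thesis
    using mod_hom_comp[OF _ assms(2)] unfolding factors_through_free_def by fastforce
qed

lemma stable_ann_iff_scalar_factors:
  "r \<in> stable_ann R X \<longleftrightarrow> r \<in> carrier R \<and> factors_through_free R X X (\<lambda>x. r \<odot>\<^bsub>X\<^esub> x)"
proof
  assume "r \<in> stable_ann R X"
  then show "r \<in> carrier R \<and> factors_through_free R X X (\<lambda>x. r \<odot>\<^bsub>X\<^esub> x)"
    unfolding stable_ann_def factors_through_free_def using mod_hom_id[of R X] by auto
next
  assume r: "r \<in> carrier R \<and> factors_through_free R X X (\<lambda>x. r \<odot>\<^bsub>X\<^esub> x)"
  have "factors_through_free R X X (\<lambda>x. r \<odot>\<^bsub>X\<^esub> \<phi> x)" if \<phi>: "\<phi> \<in> mod_hom R X X" for \<phi>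
  proof -
    have "factors_through_free R X X (\<lambda>x. \<phi> (r \<odot>\<^bsub>X\<^esub> x))"
      using r factors_through_free_comp \<phi> by blast
    moreover have "\<phi> (r \<odot>\<^bsub>X\<^esub> x) = r \<odot>\<^bsub>X\<^esub> \<phi> x" if "x \<in> carrier X" for x
      using mod_hom_smult[OF \<phi>] r that by blast
    ultimately show ?thesis unfolding factors_through_free_def by simp
  qed
  then show "r \<in> stable_ann R X"
    using r unfolding stable_ann_def factors_through_free_def by blast
qed

section \<open>Free modules\<close>

definition vec_take :: "'a ring \<Rightarrow> nat \<Rightarrow> (nat \<Rightarrow> 'a) \<Rightarrow> (nat \<Rightarrow> 'a)" where
  "vec_take R k w = (\<lambda>i. if i < k then w i else \<zero>\<^bsub>R\<^esub>)"

definition vec_drop :: "nat \<Rightarrow> (nat \<Rightarrow> 'a) \<Rightarrow> (nat \<Rightarrow> 'a)" where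
  "vec_drop k w = (\<lambda>i. w (i + k))"

definition vec_append :: "nat \<Rightarrow> (nat \<Rightarrow> 'a) \<Rightarrow> (nat \<Rightarrow> 'a) \<Rightarrow> (nat \<Rightarrow> 'a)" where
  "vec_append k a b = (\<lambda>i. if i < k then a i else b (i - k))"

definition unit_vec :: "'a ring \<Rightarrow> nat \<Rightarrow> (nat \<Rightarrow> 'a)" where
  "unit_vec R j = (\<lambda>i. if i = j then \<one>\<^bsub>R\<^esub> else \<zero>\<^bsub>R\<^esub>)"

definition lincomb :: "('a, 'b) module \<Rightarrow> nat \<Rightarrow> (nat \<Rightarrow> 'b) \<Rightarrow> (nat \<Rightarrow> 'a) \<Rightarrow> 'b" where
  "lincomb A q b c = (\<Oplus>\<^bsub>A\<^esub> j\<in>{..<q}. c j \<odot>\<^bsub>A\<^esub> b j)"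

(* The constructions of Defs take a ring of type 'a ring, not a ring scheme. *)
locale plain_cring = cring R for R :: "'a ring" (structure)

context plain_cring
begin

lemma free_mod_carrier:
  "v \<in> carrier (free_mod R k) \<longleftrightarrow> (\<forall>i<k. v i \<in> carrier R) \<and> (\<forall>i\<ge>k. v i = \<zero>)"
  by (simp add: free_mod_def)

lemma free_mod_ops:
  "\<zero>\<^bsub>free_mod R k\<^esub> = (\<lambda>i. \<zero>)"
  "v \<oplus>\<^bsub>free_mod R k\<^esub> w = (\<lambda>i. v i \<oplus> w i)"
  "a \<odot>\<^bsub>free_mod R k\<^esub> v = (\<lambda>i. a \<otimes> v i)"
  by (simp_all add: free_mod_def)

lemma free_mod_apply [simp]:
  "\<zero>\<^bsub>free_mod R k\<^esub> i = \<zero>"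
  "(v \<oplus>\<^bsub>free_mod R k\<^esub> w) i = v i \<oplus> w i"
  "(a \<odot>\<^bsub>free_mod R k\<^esub> v) i = a \<otimes> v i"
  by (simp_all add: free_mod_ops)

lemma free_mod_elem [simp]: "v \<in> carrier (free_mod R k) \<Longrightarrow> v i \<in> carrier R"
  unfolding free_mod_carrier by (metis not_less zero_closed)

lemma module_free_mod: "module R (free_mod R k)"
proof (rule moduleI)
  show "abelian_group (free_mod R k)"
  proof (rule abelian_groupI)
    fix x y z assume x: "x \<in> carrier (free_mod R k)" and y: "y \<in> carrier (free_mod R k)"
      and z: "z \<in> carrier (free_mod R k)"
    show "x \<oplus>\<^bsub>free_mod R k\<^esub> y \<oplus>\<^bsub>free_mod R k\<^esub> z = x \<oplus>\<^bsub>free_mod R k\<^esub> (y \<oplus>\<^bsub>free_mod R k\<^esub> z)"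
      using x y z by (simp add: free_mod_ops a_assoc)
    show "x \<oplus>\<^bsub>free_mod R k\<^esub> y = y \<oplus>\<^bsub>free_mod R k\<^esub> x"
      using x y by (simp add: free_mod_ops a_comm)
    show "x \<oplus>\<^bsub>free_mod R k\<^esub> y \<in> carrier (free_mod R k)"
      using x y by (simp add: free_mod_ops free_mod_carrier)
    show "\<zero>\<^bsub>free_mod R k\<^esub> \<oplus>\<^bsub>free_mod R k\<^esub> x = x"
      using x by (simp add: free_mod_ops)
    show "\<exists>y\<in>carrier (free_mod R k). y \<oplus>\<^bsub>free_mod R k\<^esub> x = \<zero>\<^bsub>free_mod R k\<^esub>"
      by (rule bexI[of _ "\<lambda>i. \<ominus> x i"]) (use x in \<open>auto simp: free_mod_ops free_mod_carrier l_neg\<close>)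
  qed (simp add: free_mod_ops free_mod_carrier)
next
  fix a x assume "a \<in> carrier R" "x \<in> carrier (free_mod R k)"
  then show "a \<odot>\<^bsub>free_mod R k\<^esub> x \<in> carrier (free_mod R k)"
    by (simp add: free_mod_ops free_mod_carrier)
next
  fix a b x assume "a \<in> carrier R" "b \<in> carrier R" "x \<in> carrier (free_mod R k)"
  then show "(a \<oplus> b) \<odot>\<^bsub>free_mod R k\<^esub> x = a \<odot>\<^bsub>free_mod R k\<^esub> x \<oplus>\<^bsub>free_mod R k\<^esub> b \<odot>\<^bsub>free_mod R k\<^esub> x"
    by (simp add: free_mod_ops l_distr)
next
  fix a x y assume "a \<in> carrier R" "x \<in> carrier (free_mod R k)" "y \<in> carrier (free_mod R k)"
  then show "a \<odot>\<^bsub>free_mod R k\<^esub> (x \<oplus>\<^bsub>free_mod R k\<^esub> y) = a \<odot>\<^bsub>free_mod R k\<^esub> x \<oplus>\<^bsub>free_mod R k\<^esub> a \<odot>\<^bsub>free_mod R k\<^esub> y"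
    by (simp add: free_mod_ops r_distr)
next
  fix a b x assume "a \<in> carrier R" "b \<in> carrier R" "x \<in> carrier (free_mod R k)"
  then show "a \<otimes> b \<odot>\<^bsub>free_mod R k\<^esub> x = a \<odot>\<^bsub>free_mod R k\<^esub> (b \<odot>\<^bsub>free_mod R k\<^esub> x)"
    by (simp add: free_mod_ops m_assoc)
next
  fix x assume "x \<in> carrier (free_mod R k)"
  then show "\<one> \<odot>\<^bsub>free_mod R k\<^esub> x = x"
    by (simp add: free_mod_ops)
qed (rule is_cring)

lemma free_mod_minus_apply [simp]:
  assumes v: "v \<in> carrier (free_mod R k)" and w: "w \<in> carrier (free_mod R k)"
  shows "(v \<ominus>\<^bsub>free_mod R k\<^esub> w) i = v i \<ominus> w i"
proof -
  interpret F: module R "free_mod R k" by (rule module_free_mod)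
  have "\<ominus>\<^bsub>free_mod R k\<^esub> w = (\<ominus> \<one>) \<odot>\<^bsub>free_mod R k\<^esub> w"
    using F.smult_l_minus[OF one_closed w] F.smult_one[OF w] by simp
  then have "(\<ominus>\<^bsub>free_mod R k\<^esub> w) i = \<ominus> w i"
    using free_mod_elem[OF w] by (simp add: l_minus)
  moreover have "(v \<ominus>\<^bsub>free_mod R k\<^esub> w) i = v i \<oplus> (\<ominus>\<^bsub>free_mod R k\<^esub> w) i"
    unfolding F.minus_eq by (rule free_mod_apply(2))
  ultimately show ?thesis using free_mod_elem[OF v] free_mod_elem[OF w] by (simp add: minus_eq)
qed

lemma free_mod_mono: "k \<le> l \<Longrightarrow> carrier (free_mod R k) \<subseteq> carrier (free_mod R l)"
  by (auto simp: free_mod_carrier)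

lemma free_mod_ops_indep:
  "x \<oplus>\<^bsub>free_mod R k\<^esub> y = x \<oplus>\<^bsub>free_mod R l\<^esub> y"
  "a \<odot>\<^bsub>free_mod R k\<^esub> x = a \<odot>\<^bsub>free_mod R l\<^esub> x"
  by (simp_all add: free_mod_ops)

lemma free_mod_Suc_last_zero:
  "v \<in> carrier (free_mod R (Suc k)) \<Longrightarrow> v k = \<zero> \<Longrightarrow> v \<in> carrier (free_mod R k)"
  unfolding free_mod_carrier by (metis le_eq_less_or_eq less_Suc_eq Suc_leI)

lemma mod_hom_free_mod_widen:
  "f \<in> mod_hom R A (free_mod R k) \<Longrightarrow> k \<le> l \<Longrightarrow> f \<in> mod_hom R A (free_mod R l)"
  unfolding mod_hom_def using free_mod_mono by (auto simp: free_mod_ops)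

lemma mod_hom_free_mod_incl: "k \<le> l \<Longrightarrow> (\<lambda>v. v) \<in> mod_hom R (free_mod R k) (free_mod R l)"
  by (rule mod_hom_free_mod_widen[OF mod_hom_id])

lemma free_mod_zero_dim: "carrier (free_mod R 0) = {\<zero>\<^bsub>free_mod R 0\<^esub>}"
  by (auto simp: free_mod_carrier free_mod_ops)

lemma unit_vec_closed: "j < k \<Longrightarrow> unit_vec R j \<in> carrier (free_mod R k)"
  by (auto simp: unit_vec_def free_mod_carrier)

lemma vec_take_closed: "vec_take R k w \<in> carrier (free_mod R k) \<longleftrightarrow> (\<forall>i<k. w i \<in> carrier R)"
  by (auto simp: vec_take_def free_mod_carrier)

lemma mod_hom_vec_take: "vec_take R k \<in> mod_hom R (free_mod R l) (free_mod R k)"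
proof (rule mod_homI)
  fix x assume "x \<in> carrier (free_mod R l)"
  then show "vec_take R k x \<in> carrier (free_mod R k)" by (simp add: vec_take_closed)
qed (auto simp: vec_take_def)

lemma mod_hom_vec_drop: "vec_drop k \<in> mod_hom R (free_mod R (k + l)) (free_mod R l)"
  by (rule mod_homI) (auto simp: vec_drop_def free_mod_carrier)

lemma mod_hom_vec_append:
  assumes "f \<in> mod_hom R A (free_mod R k)" and "g \<in> mod_hom R A (free_mod R l)"
  shows "(\<lambda>x. vec_append k (f x) (g x)) \<in> mod_hom R A (free_mod R (k + l))"
  using assms unfolding mod_hom_def
  by (auto simp: Pi_def vec_append_def free_mod_carrier free_mod_ops)

lemma vec_take_append: "a \<in> carrier (free_mod R k) \<Longrightarrow> vec_take R k (vec_append k a b) = a"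
  by (auto simp: free_mod_carrier vec_append_def vec_take_def)

lemma vec_drop_append: "vec_drop k (vec_append k a b) = b"
  by (auto simp: vec_append_def vec_drop_def)

lemma vec_append_closed:
  "a \<in> carrier (free_mod R k) \<Longrightarrow> b \<in> carrier (free_mod R l) \<Longrightarrow> vec_append k a b \<in> carrier (free_mod R (k + l))"
  by (auto simp: free_mod_carrier vec_append_def)

lemma vec_take_id: "v \<in> carrier (free_mod R k) \<Longrightarrow> vec_take R k v = v"
  by (auto simp: free_mod_carrier vec_take_def)

lemma lincomb_Suc:
  assumes A: "module R A" and b: "\<forall>j\<le>q. b j \<in> carrier A" and c: "\<forall>j. c j \<in> carrier R"
  shows "lincomb A (Suc q) b c = lincomb A q b c \<oplus>\<^bsub>A\<^esub> c q \<odot>\<^bsub>A\<^esub> b q"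
proof -
  interpret A: module R A by (rule A)
  have "(\<lambda>j. c j \<odot>\<^bsub>A\<^esub> b j) \<in> insert q {..<q} \<rightarrow> carrier A" using b c by auto
  then show ?thesis
    unfolding lincomb_def lessThan_Suc
    by (simp add: A.finsum_insert A.a_comm[OF _ A.finsum_closed])
qed

lemma lincomb_hom:
  assumes A: "module R A" and b: "\<forall>j<q. b j \<in> carrier A"
  shows "lincomb A q b \<in> mod_hom R (free_mod R q) A"
proof -
  interpret A: module R A by (rule A)
  show ?thesis
  proof (rule mod_homI)
    fix c assume "c \<in> carrier (free_mod R q)"
    then show "lincomb A q b c \<in> carrier A" using b by (auto simp: lincomb_def intro: A.finsum_closed)
  next
    fix c c' assume c: "c \<in> carrier (free_mod R q)" and c': "c' \<in> carrier (free_mod R q)"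
    have "lincomb A q b (c \<oplus>\<^bsub>free_mod R q\<^esub> c') = (\<Oplus>\<^bsub>A\<^esub> j\<in>{..<q}. c j \<odot>\<^bsub>A\<^esub> b j \<oplus>\<^bsub>A\<^esub> c' j \<odot>\<^bsub>A\<^esub> b j)"
      unfolding lincomb_def using b c c' by (intro A.finsum_cong) (auto simp: A.smult_l_distr)
    also have "\<dots> = lincomb A q b c \<oplus>\<^bsub>A\<^esub> lincomb A q b c'"
      unfolding lincomb_def using b c c' by (intro A.finsum_addf) auto
    finally show "lincomb A q b (c \<oplus>\<^bsub>free_mod R q\<^esub> c') = lincomb A q b c \<oplus>\<^bsub>A\<^esub> lincomb A q b c'" .
  next
    fix a c assume a: "a \<in> carrier R" and c: "c \<in> carrier (free_mod R q)"
    have "lincomb A q b (a \<odot>\<^bsub>free_mod R q\<^esub> c) = (\<Oplus>\<^bsub>A\<^esub> j\<in>{..<q}. a \<odot>\<^bsub>A\<^esub> (c j \<odot>\<^bsub>A\<^esub> b j))"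
      unfolding lincomb_def using a b c by (intro A.finsum_cong) (auto simp: A.smult_assoc1)
    also have "\<dots> = a \<odot>\<^bsub>A\<^esub> lincomb A q b c"
      unfolding lincomb_def using a b c by (intro A.finsum_smult_ldistr[symmetric]) auto
    finally show "lincomb A q b (a \<odot>\<^bsub>free_mod R q\<^esub> c) = a \<odot>\<^bsub>A\<^esub> lincomb A q b c" .
  qed
qed

lemma lincomb_unit_vec:
  assumes A: "module R A" and b: "\<forall>j<q. b j \<in> carrier A" and j: "j < q"
  shows "lincomb A q b (unit_vec R j) = b j"
proof -
  interpret A: module R A by (rule A)
  have "lincomb A q b (unit_vec R j) = (\<Oplus>\<^bsub>A\<^esub> i\<in>{..<q}. if j = i then b i else \<zero>\<^bsub>A\<^esub>)"
    unfolding lincomb_def using b by (intro A.finsum_cong') (auto simp: unit_vec_def)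
  also have "\<dots> = b j"
    using b j by (intro A.finsum_singleton) auto
  finally show ?thesis .
qed

lemma lincomb_in_submodule:
  assumes A: "module R A" and S: "submodule S R A"
    and b: "\<forall>j<q. b j \<in> S" and c: "\<forall>j. c j \<in> carrier R"
  shows "lincomb A q b c \<in> S"
  using b
proof (induction q)
  case 0
  interpret A: module R A by (rule A)
  show ?case using subgroup.one_closed[OF submodule.axioms(1)[OF S]] by (simp add: lincomb_def)
next
  case (Suc q)
  interpret A: module R A by (rule A)
  have "\<forall>j\<le>q. b j \<in> carrier A" using Suc.prems A.submoduleE(1)[OF S] by auto
  then show ?case
    using Suc c A.submoduleE(4,5)[OF S] by (simp add: lincomb_Suc[OF A])
qed

lemma free_mod_hom_eqI:
  assumes A: "module R A" and f: "f \<in> mod_hom R (free_mod R k) A" and g: "g \<in> mod_hom R (free_mod R k) A"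
    and basis: "\<And>j. j < k \<Longrightarrow> f (unit_vec R j) = g (unit_vec R j)"
    and v: "v \<in> carrier (free_mod R k)"
  shows "f v = g v"
proof -
  have take_closed: "t \<le> k \<Longrightarrow> vec_take R t v \<in> carrier (free_mod R k)" for t
    using v free_mod_mono[of t k] by (auto simp: vec_take_closed)
  have "t \<le> k \<Longrightarrow> f (vec_take R t v) = g (vec_take R t v)" for t
  proof (induction t)
    case 0
    have "vec_take R 0 v = \<zero>\<^bsub>free_mod R k\<^esub>" by (simp add: vec_take_def free_mod_ops)
    then show ?case using mod_hom_zero[OF module_free_mod A f] mod_hom_zero[OF module_free_mod A g] by metis
  next
    case (Suc t)
    have e: "unit_vec R t \<in> carrier (free_mod R k)" using Suc.prems by (simp add: unit_vec_closed)
    have dec: "vec_take R (Suc t) v = vec_take R t v \<oplus>\<^bsub>free_mod R k\<^esub> v t \<odot>\<^bsub>free_mod R k\<^esub> unit_vec R t"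
      using v by (auto simp: vec_take_def unit_vec_def free_mod_ops less_Suc_eq intro!: ext)
    have t: "vec_take R t v \<in> carrier (free_mod R k)" "v t \<in> carrier R"
      "v t \<odot>\<^bsub>free_mod R k\<^esub> unit_vec R t \<in> carrier (free_mod R k)"
      using take_closed[of t] Suc.prems v e by (simp_all add: module.smult_closed[OF module_free_mod])
    have "h (vec_take R (Suc t) v) = h (vec_take R t v) \<oplus>\<^bsub>A\<^esub> v t \<odot>\<^bsub>A\<^esub> h (unit_vec R t)"
      if h: "h \<in> mod_hom R (free_mod R k) A" for h
      unfolding dec by (simp only: mod_hom_add[OF h t(1,3)] mod_hom_smult[OF h t(2) e])
    from this[OF f] this[OF g] show ?case using Suc basis[of t] by simp
  qed
  from this[of k] show ?thesis using v by (simp add: vec_take_id)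
qed

lemma free_mod_lift:
  assumes A: "module R A" and f: "f \<in> mod_hom R (free_mod R k) A" and p: "p \<in> mod_hom R (free_mod R l) A"
    and img: "\<And>v. v \<in> carrier (free_mod R k) \<Longrightarrow> f v \<in> p ` carrier (free_mod R l)"
  shows "\<exists>h\<in>mod_hom R (free_mod R k) (free_mod R l). \<forall>v\<in>carrier (free_mod R k). p (h v) = f v"
proof -
  have "\<forall>j\<in>{..<k}. \<exists>u\<in>carrier (free_mod R l). p u = f (unit_vec R j)"
    using img unit_vec_closed by (metis imageE lessThan_iff)
  then obtain b where b: "\<And>j. j < k \<Longrightarrow> b j \<in> carrier (free_mod R l) \<and> p (b j) = f (unit_vec R j)"
    by (metis lessThan_iff)
  have h: "lincomb (free_mod R l) k b \<in> mod_hom R (free_mod R k) (free_mod R l)"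
    using b by (simp add: lincomb_hom[OF module_free_mod])
  have "p (lincomb (free_mod R l) k b v) = f v" if "v \<in> carrier (free_mod R k)" for v
    by (rule free_mod_hom_eqI[OF A mod_hom_comp[OF h p] f _ that])
      (use b in \<open>simp add: lincomb_unit_vec[OF module_free_mod]\<close>)
  with h show ?thesis by blast
qed

lemma free_mod_lift_into_kernel:
  assumes \<beta>: "\<beta> \<in> mod_hom R (free_mod R k) (free_mod R l)"
    and d: "d \<in> mod_hom R (free_mod R j) (free_mod R l)"
    and exact: "mod_kernel (free_mod R l) Y \<psi> = d ` carrier (free_mod R j)"
    and vanish: "\<And>x. x \<in> carrier (free_mod R k) \<Longrightarrow> \<psi> (\<beta> x) = \<zero>\<^bsub>Y\<^esub>"
  shows "\<exists>\<sigma>\<in>mod_hom R (free_mod R k) (free_mod R j). \<forall>x\<in>carrier (free_mod R k). d (\<sigma> x) = \<beta> x"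
proof (rule free_mod_lift[OF module_free_mod \<beta> d])
  fix x assume x: "x \<in> carrier (free_mod R k)"
  have "\<beta> x \<in> mod_kernel (free_mod R l) Y \<psi>"
    using vanish[OF x] mod_hom_closed[OF \<beta> x] by (simp add: mod_kernel_def)
  then show "\<beta> x \<in> d ` carrier (free_mod R j)" using exact by simp
qed

section \<open>Submodules of free modules over a Noetherian ring\<close>

lemma ideal_of_submodule_self_mod:
  assumes I: "submodule I R (self_mod R)"
  shows "ideal I R"
proof -
  interpret M: module R "self_mod R" by (rule module_self_mod[OF is_cring])
  note I' = M.submoduleE[OF I, simplified]
  have neg: "\<ominus> a \<in> I" if "a \<in> I" for a
    using I'(4)[OF _ that, of "\<ominus> \<one>"] I'(1) that by (auto simp: l_minus)
  show ?thesis
  proof (rule idealI[OF ring_axioms])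
    show "subgroup I (add_monoid R)"
      by (rule add.subgroupI) (use I' neg in \<open>auto simp: a_inv_def[symmetric]\<close>)
    show "x \<otimes> a \<in> I" if "a \<in> I" "x \<in> carrier R" for a x
      using I'(4) that by simp
    then show "a \<otimes> x \<in> I" if "a \<in> I" "x \<in> carrier R" for a x
      using that I'(1) m_comm by (metis subsetD)
  qed
qed

lemma mod_hom_coordinate: "(\<lambda>v. v i) \<in> mod_hom R (free_mod R k) (self_mod R)"
  by (rule mod_homI) simp_all

lemma ideal_coordinate_image:
  assumes S: "submodule S R (free_mod R k)"
  shows "ideal ((\<lambda>v. v i) ` S) R"
proof -
  have "submodule ((\<lambda>v. v i) ` carrier (submod (free_mod R k) S)) R (self_mod R)"
    using S module_free_mod subgroup.subset[OF submodule.axioms(1)[OF S]]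
    by (intro mod_hom_image_submodule module_submod module_self_mod is_cring
        mod_hom_restrict_submod mod_hom_coordinate) auto
  then show ?thesis by (simp add: ideal_of_submodule_self_mod)
qed

lemma submodule_restrict_dim:
  assumes S: "submodule S R (free_mod R l)"
  shows "submodule (S \<inter> carrier (free_mod R k)) R (free_mod R k)"
proof -
  interpret Fk: module R "free_mod R k" by (rule module_free_mod)
  interpret Fl: module R "free_mod R l" by (rule module_free_mod)
  note S' = Fl.submoduleE[OF S]
  show ?thesis
  proof (rule Fk.submoduleI)
    obtain x where x: "x \<in> S" using S'(2) by blast
    then have "\<zero> \<odot>\<^bsub>free_mod R l\<^esub> x = \<zero>\<^bsub>free_mod R k\<^esub>"
      using S'(1) by (auto simp: free_mod_ops)
    then show "\<zero>\<^bsub>free_mod R k\<^esub> \<in> S \<inter> carrier (free_mod R k)" using S'(4)[OF _ x] by force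
  next
    fix a x assume a: "a \<in> carrier R" and x: "x \<in> S \<inter> carrier (free_mod R k)"
    have "a \<odot>\<^bsub>free_mod R l\<^esub> x \<in> S" using a x S'(4) by simp
    then show "a \<odot>\<^bsub>free_mod R k\<^esub> x \<in> S \<inter> carrier (free_mod R k)"
      using a x by (simp add: free_mod_ops_indep(2)[where k=k and l=l, symmetric])
  next
    fix x y assume "x \<in> S \<inter> carrier (free_mod R k)" "y \<in> S \<inter> carrier (free_mod R k)"
    then show "x \<oplus>\<^bsub>free_mod R k\<^esub> y \<in> S \<inter> carrier (free_mod R k)"
      using S'(5)[of x y] by (simp add: free_mod_ops_indep(1)[where k=k and l=l, symmetric])
  next
    fix x assume x: "x \<in> S \<inter> carrier (free_mod R k)"
    have "\<ominus>\<^bsub>free_mod R k\<^esub> x = (\<ominus> \<one>) \<odot>\<^bsub>free_mod R k\<^esub> x"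
      using x Fk.smult_l_minus[OF one_closed, of x] by simp
    moreover have "(\<ominus> \<one>) \<odot>\<^bsub>free_mod R l\<^esub> x \<in> S" using x S'(4) by simp
    ultimately show "\<ominus>\<^bsub>free_mod R k\<^esub> x \<in> S \<inter> carrier (free_mod R k)"
      using x by (simp add: free_mod_ops_indep(2)[where k=k and l=l, symmetric])
  qed auto
qed

lemma noetherian_ideal_enum_gen:
  assumes noeth: "noetherian_ring R" and I: "ideal I R"
  shows "\<exists>(q :: nat) a. a ` {..<q} \<subseteq> carrier R \<and> I = Idl (a ` {..<q})"
proof -
  have "\<exists>A. finite A \<and> A \<subseteq> carrier R \<and> I = Idl A"
    using noeth I unfolding noetherian_ring_def by simp
  then obtain A where A: "finite A" "A \<subseteq> carrier R" "I = Idl A" by (elim exE conjE)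
  obtain q :: nat and a :: "nat \<Rightarrow> 'a" where "A = a ` {i. i < q}"
    using finite_imp_nat_seg_image_inj_on[OF A(1)] by blast
  then have "A = a ` {..<q}" by (simp add: lessThan_def)
  with A(2,3) show ?thesis by (intro exI[of _ q] exI[of _ a]) simp
qed

lemma submodule_last_coordinate_cover:
  assumes noeth: "noetherian_ring R" and S: "submodule S R (free_mod R (Suc k))"
  shows "\<exists>q D. D \<in> mod_hom R (free_mod R q) (free_mod R (Suc k)) \<and> D ` carrier (free_mod R q) \<subseteq> S \<and>
    (\<forall>v\<in>S. \<exists>c\<in>carrier (free_mod R q). D c k = v k)"
proof -
  interpret F: module R "free_mod R (Suc k)" by (rule module_free_mod)
  obtain q :: nat and a where a: "a ` {..<q} \<subseteq> carrier R" "(\<lambda>v. v k) ` S = Idl (a ` {..<q})"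
    using noetherian_ideal_enum_gen[OF noeth ideal_coordinate_image[OF S, of k]] by (elim exE conjE)
  have "\<forall>j\<in>{..<q}. \<exists>s. s \<in> S \<and> s k = a j"
  proof
    fix j assume "j \<in> {..<q}"
    then have "a j \<in> Idl (a ` {..<q})" using genideal_self[OF a(1)] by auto
    then show "\<exists>s. s \<in> S \<and> s k = a j" using a(2) by (metis imageE)
  qed
  then obtain sv where sv: "\<forall>j\<in>{..<q}. sv j \<in> S \<and> sv j k = a j"
    by (rule bchoice[elim_format]) blast
  have svc: "\<forall>j<q. sv j \<in> carrier (free_mod R (Suc k))"
    using sv F.submoduleE(1)[OF S] by auto
  define D where "D = lincomb (free_mod R (Suc k)) q sv"
  have D: "D \<in> mod_hom R (free_mod R q) (free_mod R (Suc k))"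
    unfolding D_def by (rule lincomb_hom[OF module_free_mod svc])
  have DS: "D ` carrier (free_mod R q) \<subseteq> S"
    unfolding D_def using sv by (auto intro!: lincomb_in_submodule[OF module_free_mod S])
  have "ideal ((\<lambda>v. v k) ` D ` carrier (free_mod R q)) R"
    by (intro ideal_coordinate_image[where k="Suc k"] mod_hom_image_submodule module_free_mod D)
  moreover have "a ` {..<q} \<subseteq> (\<lambda>v. v k) ` D ` carrier (free_mod R q)"
  proof
    fix x assume "x \<in> a ` {..<q}"
    then obtain j where j: "j < q" "x = a j" by blast
    then have "x = D (unit_vec R j) k"
      using sv lincomb_unit_vec[OF module_free_mod svc j(1)] by (simp add: D_def)
    then show "x \<in> (\<lambda>v. v k) ` D ` carrier (free_mod R q)" using unit_vec_closed[OF j(1)] by blast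
  qed
  ultimately have cover: "Idl (a ` {..<q}) \<subseteq> (\<lambda>v. v k) ` D ` carrier (free_mod R q)"
    by (rule genideal_minimal)
  have "\<forall>v\<in>S. \<exists>c\<in>carrier (free_mod R q). D c k = v k"
  proof
    fix v assume "v \<in> S"
    then have "v k \<in> (\<lambda>v. v k) ` D ` carrier (free_mod R q)" using cover a(2) by blast
    then show "\<exists>c\<in>carrier (free_mod R q). D c k = v k" by auto
  qed
  with D DS show ?thesis by (intro exI[of _ q] exI[of _ D] conjI)
qed

lemma submodule_Suc_image:
  assumes S: "submodule S R (free_mod R (Suc k))"
    and D1S: "D1 ` carrier (free_mod R q) \<subseteq> S"
    and cover: "\<forall>v\<in>S. \<exists>c\<in>carrier (free_mod R q). D1 c k = v k"
    and D2S: "D2 ` carrier (free_mod R p) = S \<inter> carrier (free_mod R k)"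
  defines "D \<equiv> \<lambda>w. D1 (vec_take R q w) \<oplus>\<^bsub>free_mod R (Suc k)\<^esub> D2 (vec_drop q w)"
  shows "D ` carrier (free_mod R (q + p)) = S"
proof -
  interpret F: module R "free_mod R (Suc k)" by (rule module_free_mod)
  note S' = F.submoduleE[OF S]
  have "D ` carrier (free_mod R (q + p)) \<subseteq> S"
  proof
    fix x assume "x \<in> D ` carrier (free_mod R (q + p))"
    then obtain w where w: "w \<in> carrier (free_mod R (q + p))" "x = D w" by blast
    have "D1 (vec_take R q w) \<in> S" using D1S mod_hom_closed[OF mod_hom_vec_take w(1)] by blast
    moreover have "D2 (vec_drop q w) \<in> S" using D2S mod_hom_closed[OF mod_hom_vec_drop w(1)] by blast
    ultimately show "x \<in> S" using S'(5) w(2) by (simp add: D_def)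
  qed
  moreover have "v \<in> D ` carrier (free_mod R (q + p))" if v: "v \<in> S" for v
  proof -
    obtain c where c: "c \<in> carrier (free_mod R q)" "D1 c k = v k" using cover v by blast
    have D1c: "D1 c \<in> S" using D1S c(1) by blast
    define v' where "v' = v \<ominus>\<^bsub>free_mod R (Suc k)\<^esub> D1 c"
    have carr: "v \<in> carrier (free_mod R (Suc k))" "D1 c \<in> carrier (free_mod R (Suc k))"
      using v D1c S'(1) by auto
    have "v' \<in> S" unfolding v'_def F.minus_eq using S'(5)[OF v S'(3)[OF D1c]] .
    moreover have "v' \<in> carrier (free_mod R k)"
    proof (rule free_mod_Suc_last_zero)
      show "v' \<in> carrier (free_mod R (Suc k))" unfolding v'_def using carr by simp
      show "v' k = \<zero>" using carr c(2) by (simp add: v'_def minus_eq r_neg)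
    qed
    ultimately have "v' \<in> D2 ` carrier (free_mod R p)" using D2S by simp
    then obtain c' where c': "c' \<in> carrier (free_mod R p)" "D2 c' = v'" by (elim imageE) simp
    have "D (vec_append q c c') = D1 c \<oplus>\<^bsub>free_mod R (Suc k)\<^esub> v'"
      by (simp add: D_def vec_take_append[OF c(1)] vec_drop_append c')
    also have "\<dots> = v"
      using carr by (simp add: v'_def F.minus_eq F.a_lcomm[of "D1 c"] F.r_neg)
    finally show ?thesis using vec_append_closed[OF c(1) c'(1)] by (metis image_eqI)
  qed
  ultimately show ?thesis by blast
qed

lemma submodule_free_mod_fin_gen:
  assumes noeth: "noetherian_ring R"
  shows "submodule S R (free_mod R k) \<Longrightarrow>
    \<exists>p D. D \<in> mod_hom R (free_mod R p) (free_mod R k) \<and> D ` carrier (free_mod R p) = S"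
proof (induction k arbitrary: S)
  case 0
  interpret F: module R "free_mod R 0" by (rule module_free_mod)
  have "S = carrier (free_mod R 0)"
    using F.submoduleE(1,2)[OF "0"] free_mod_zero_dim by auto
  then show ?case
    by (intro exI[of _ 0] exI[of _ "\<lambda>v. v"] conjI mod_hom_id) simp
next
  case (Suc k)
  note S = Suc.prems
  obtain q D1 where D1: "D1 \<in> mod_hom R (free_mod R q) (free_mod R (Suc k))"
    and D1S: "D1 ` carrier (free_mod R q) \<subseteq> S"
    and cover: "\<forall>v\<in>S. \<exists>c\<in>carrier (free_mod R q). D1 c k = v k"
    using submodule_last_coordinate_cover[OF noeth S] by (elim exE conjE)
  obtain p D2 where D2: "D2 \<in> mod_hom R (free_mod R p) (free_mod R k)"
    and D2S: "D2 ` carrier (free_mod R p) = S \<inter> carrier (free_mod R k)"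
    using Suc.IH[OF submodule_restrict_dim[OF S]] by (elim exE conjE)
  define D where "D w = D1 (vec_take R q w) \<oplus>\<^bsub>free_mod R (Suc k)\<^esub> D2 (vec_drop q w)" for w
  have D: "D \<in> mod_hom R (free_mod R (q + p)) (free_mod R (Suc k))"
    unfolding D_def
    by (intro mod_hom_pointwise_add[OF module_free_mod] mod_hom_comp[OF mod_hom_vec_take D1]
        mod_hom_comp[OF mod_hom_vec_drop mod_hom_free_mod_widen[OF D2]]) auto
  moreover have "D ` carrier (free_mod R (q + p)) = S"
    unfolding D_def by (rule submodule_Suc_image[OF S D1S cover D2S])
  ultimately show ?case by blast
qed

lemma submodule_free_mod_fin_gen_fun:
  assumes noeth: "noetherian_ring R"
  shows "\<exists>P D. \<forall>l S. submodule S R (free_mod R l) \<longrightarrow>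
    D l S \<in> mod_hom R (free_mod R (P l S)) (free_mod R l) \<and> D l S ` carrier (free_mod R (P l S)) = S"
proof -
  have "\<forall>lS. \<exists>pD. submodule (snd lS) R (free_mod R (fst lS)) \<longrightarrow>
    snd pD \<in> mod_hom R (free_mod R (fst pD)) (free_mod R (fst lS)) \<and>
    snd pD ` carrier (free_mod R (fst pD)) = snd lS"
  proof
    fix lS :: "nat \<times> (nat \<Rightarrow> 'a) set"
    show "\<exists>pD. submodule (snd lS) R (free_mod R (fst lS)) \<longrightarrow>
      snd pD \<in> mod_hom R (free_mod R (fst pD)) (free_mod R (fst lS)) \<and>
      snd pD ` carrier (free_mod R (fst pD)) = snd lS"
      using submodule_free_mod_fin_gen[OF noeth] by fastforce
  qed
  then obtain f where "\<forall>lS. submodule (snd lS) R (free_mod R (fst lS)) \<longrightarrow>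
    snd (f lS) \<in> mod_hom R (free_mod R (fst (f lS))) (free_mod R (fst lS)) \<and>
    snd (f lS) ` carrier (free_mod R (fst (f lS))) = snd lS"
    by (rule choice[elim_format]) blast
  then show ?thesis by (intro exI[of _ "\<lambda>l S. fst (f (l, S))"] exI[of _ "\<lambda>l S. snd (f (l, S))"]) auto
qed

lemma free_resolution_exists:
  assumes noeth: "noetherian_ring R" and X: "module R X"
    and eps: "\<epsilon> \<in> mod_hom R (free_mod R k) X" and onto: "\<epsilon> ` carrier (free_mod R k) = carrier X"
  shows "\<exists>n d. n 0 = k \<and> free_resolution R X n \<epsilon> d"
proof -
  obtain P D where PD: "\<And>l S. submodule S R (free_mod R l) \<Longrightarrow>
      D l S \<in> mod_hom R (free_mod R (P l S)) (free_mod R l) \<and> D l S ` carrier (free_mod R (P l S)) = S"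
    using submodule_free_mod_fin_gen_fun[OF noeth] by blast
  define stage where "stage = rec_nat (k, mod_kernel (free_mod R k) X \<epsilon>)
    (\<lambda>_ (l, S). (P l S, mod_kernel (free_mod R (P l S)) (free_mod R l) (D l S)))"
  define n where "n i = fst (stage i)" for i
  define d where "d i = D (n (i - 1)) (snd (stage (i - 1)))" for i
  have stage_0: "n 0 = k" "snd (stage 0) = mod_kernel (free_mod R k) X \<epsilon>"
    by (simp_all add: n_def stage_def)
  have stage_Suc: "n (Suc i) = P (n i) (snd (stage i))"
    "snd (stage (Suc i)) = mod_kernel (free_mod R (n (Suc i))) (free_mod R (n i)) (d (Suc i))" for i
    by (simp_all add: n_def d_def stage_def split: prod.split)
  have sub: "submodule (snd (stage i)) R (free_mod R (n i))" for i
  proof (induction i)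
    case 0
    then show ?case using mod_kernel_submodule[OF module_free_mod X eps] stage_0 by simp
  next
    case (Suc i)
    then show ?case
      using PD[OF Suc] mod_kernel_submodule[OF module_free_mod module_free_mod]
      by (simp add: stage_Suc d_def)
  qed
  have d: "d (Suc i) \<in> mod_hom R (free_mod R (n (Suc i))) (free_mod R (n i))"
    "d (Suc i) ` carrier (free_mod R (n (Suc i))) = snd (stage i)" for i
    using PD[OF sub[of i]] by (simp_all add: d_def stage_Suc(1))
  have "free_resolution R X n \<epsilon> d"
    unfolding free_resolution_def using eps onto d d(2)[of 0] stage_0 stage_Suc(2)
    by (simp add: d(2)[of "Suc i" for i])
  then show ?thesis using stage_0(1) by blast
qed

section \<open>Annihilators of Ext\<close>

lemma free_resolution_d_hom:
  "free_resolution R X n \<epsilon> d \<Longrightarrow> d (Suc i) \<in> mod_hom R (free_mod R (n (Suc i))) (free_mod R (n i))"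
  unfolding free_resolution_def by blast

lemma free_resolution_exact:
  "free_resolution R X n \<epsilon> d \<Longrightarrow>
    mod_kernel (free_mod R (n (Suc i))) (free_mod R (n i)) (d (Suc i))
      = d (Suc (Suc i)) ` carrier (free_mod R (n (Suc (Suc i))))"
  unfolding free_resolution_def by blast

lemma free_resolution_d_d:
  assumes "free_resolution R X n \<epsilon> d" and "x \<in> carrier (free_mod R (n (Suc (Suc k))))"
  shows "d (Suc k) (d (Suc (Suc k)) x) = \<zero>\<^bsub>free_mod R (n k)\<^esub>"
  using free_resolution_exact[OF assms(1), of k] assms(2) unfolding mod_kernel_def by blast

lemma free_resolution_eps_d:
  assumes "free_resolution R X n \<epsilon> d" and "x \<in> carrier (free_mod R (n 1))"
  shows "\<epsilon> (d 1 x) = \<zero>\<^bsub>X\<^esub>"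
  using assms unfolding free_resolution_def mod_kernel_def by blast

(* A component \<sigma> with d \<sigma> d = r d admits a next component \<tau> with d \<tau> + \<sigma> d = r, and then
   d \<tau> d = r d holds again; iterating builds a null-homotopy of multiplication by r. *)
lemma free_resolution_homotopy_step:
  assumes res: "free_resolution R X n \<epsilon> d" and r: "r \<in> carrier R"
    and \<sigma>: "\<sigma> \<in> mod_hom R (free_mod R (n k)) (free_mod R (n (Suc k)))"
    and inv: "\<forall>y\<in>carrier (free_mod R (n (Suc k))).
      d (Suc k) (\<sigma> (d (Suc k) y)) = r \<odot>\<^bsub>free_mod R (n k)\<^esub> d (Suc k) y"
  shows "\<exists>\<tau>\<in>mod_hom R (free_mod R (n (Suc k))) (free_mod R (n (Suc (Suc k)))).
    \<forall>x\<in>carrier (free_mod R (n (Suc k))).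
      d (Suc (Suc k)) (\<tau> x) = r \<odot>\<^bsub>free_mod R (n (Suc k))\<^esub> x \<ominus>\<^bsub>free_mod R (n (Suc k))\<^esub> \<sigma> (d (Suc k) x)"
proof (rule free_mod_lift_into_kernel[OF _ free_resolution_d_hom[OF res] free_resolution_exact[OF res]])
  let ?F = "free_mod R (n (Suc k))"
  interpret F0: module R "free_mod R (n k)" by (rule module_free_mod)
  note d1 = free_resolution_d_hom[OF res, of k]
  show "(\<lambda>x. r \<odot>\<^bsub>?F\<^esub> x \<ominus>\<^bsub>?F\<^esub> \<sigma> (d (Suc k) x)) \<in> mod_hom R ?F ?F"
    by (intro mod_hom_pointwise_diff[OF module_free_mod] mod_hom_scale[OF module_free_mod]
        mod_hom_id r mod_hom_comp[OF d1 \<sigma>])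
  fix x assume x: "x \<in> carrier ?F"
  have dx: "d (Suc k) x \<in> carrier (free_mod R (n k))" by (rule mod_hom_closed[OF d1 x])
  show "d (Suc k) (r \<odot>\<^bsub>?F\<^esub> x \<ominus>\<^bsub>?F\<^esub> \<sigma> (d (Suc k) x)) = \<zero>\<^bsub>free_mod R (n k)\<^esub>"
    using x dx mod_hom_closed[OF \<sigma> dx] r inv
    by (simp add: mod_hom_minus[OF module_free_mod module_free_mod d1] mod_hom_smult[OF d1]
        module.smult_closed[OF module_free_mod] F0.r_neg F0.minus_eq)
qed

lemma free_resolution_homotopy_base:
  assumes X: "module R X" and res: "free_resolution R X n \<epsilon> d" and r: "r \<in> carrier R"
    and fac: "factors_through_free R X X (\<lambda>x. r \<odot>\<^bsub>X\<^esub> x)"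
  shows "\<exists>\<sigma>\<in>mod_hom R (free_mod R (n 0)) (free_mod R (n 1)).
    \<forall>y\<in>carrier (free_mod R (n 1)). d 1 (\<sigma> (d 1 y)) = r \<odot>\<^bsub>free_mod R (n 0)\<^esub> d 1 y"
proof -
  let ?F = "free_mod R (n 0)"
  interpret X: module R X by (rule X)
  interpret F: module R ?F by (rule module_free_mod)
  have eps: "\<epsilon> \<in> mod_hom R ?F X" and onto: "\<epsilon> ` carrier ?F = carrier X"
    and ker: "mod_kernel ?F X \<epsilon> = d 1 ` carrier (free_mod R (n 1))"
    using res unfolding free_resolution_def by auto
  have d1: "d 1 \<in> mod_hom R (free_mod R (n 1)) ?F" using free_resolution_d_hom[OF res, of 0] by simp
  obtain m g h where g: "g \<in> mod_hom R X (free_mod R m)" and h: "h \<in> mod_hom R (free_mod R m) X"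
    and hg: "\<forall>x\<in>carrier X. h (g x) = r \<odot>\<^bsub>X\<^esub> x"
    using fac unfolding factors_through_free_def by blast
  obtain H where H: "H \<in> mod_hom R (free_mod R m) ?F" and eH: "\<forall>v\<in>carrier (free_mod R m). \<epsilon> (H v) = h v"
    using free_mod_lift[OF X h eps] mod_hom_closed[OF h] onto by blast
  define \<alpha> where "\<alpha> x = H (g (\<epsilon> x))" for x
  have \<alpha>: "\<alpha> \<in> mod_hom R ?F ?F"
    unfolding \<alpha>_def by (intro mod_hom_comp[OF mod_hom_comp[OF eps g] H])
  have \<beta>: "(\<lambda>x. r \<odot>\<^bsub>?F\<^esub> x \<ominus>\<^bsub>?F\<^esub> \<alpha> x) \<in> mod_hom R ?F ?F"
    by (intro mod_hom_pointwise_diff[OF module_free_mod] mod_hom_scale[OF module_free_mod] mod_hom_id r \<alpha>)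
  have "\<epsilon> (r \<odot>\<^bsub>?F\<^esub> x \<ominus>\<^bsub>?F\<^esub> \<alpha> x) = \<zero>\<^bsub>X\<^esub>" if x: "x \<in> carrier ?F" for x
  proof -
    have ex: "\<epsilon> x \<in> carrier X" by (rule mod_hom_closed[OF eps x])
    then show ?thesis
      using x r hg eH mod_hom_closed[OF g ex] mod_hom_closed[OF \<alpha> x]
      by (simp add: mod_hom_minus[OF module_free_mod X eps] mod_hom_smult[OF eps] \<alpha>_def
          X.r_neg X.minus_eq)
  qed
  from free_mod_lift_into_kernel[OF \<beta> d1 ker this]
  obtain \<sigma> where \<sigma>: "\<sigma> \<in> mod_hom R ?F (free_mod R (n 1))"
    and d\<sigma>: "\<forall>x\<in>carrier ?F. d 1 (\<sigma> x) = r \<odot>\<^bsub>?F\<^esub> x \<ominus>\<^bsub>?F\<^esub> \<alpha> x"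
    by blast
  have "d 1 (\<sigma> (d 1 y)) = r \<odot>\<^bsub>?F\<^esub> d 1 y" if y: "y \<in> carrier (free_mod R (n 1))" for y
  proof -
    have "\<alpha> (d 1 y) = \<zero>\<^bsub>?F\<^esub>"
      using free_resolution_eps_d[OF res y] mod_hom_zero[OF X module_free_mod g]
        mod_hom_zero[OF module_free_mod module_free_mod H] by (simp add: \<alpha>_def)
    then show ?thesis using d\<sigma> mod_hom_closed[OF d1 y] r by (simp add: F.minus_eq)
  qed
  then show ?thesis using \<sigma> by blast
qed

lemma free_resolution_null_homotopy:
  assumes X: "module R X" and res: "free_resolution R X n \<epsilon> d" and r: "r \<in> carrier R"
    and fac: "factors_through_free R X X (\<lambda>x. r \<odot>\<^bsub>X\<^esub> x)"
  shows "\<exists>\<sigma>\<in>mod_hom R (free_mod R (n k)) (free_mod R (n (Suc k))).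
    \<forall>y\<in>carrier (free_mod R (n (Suc k))). d (Suc k) (\<sigma> (d (Suc k) y)) = r \<odot>\<^bsub>free_mod R (n k)\<^esub> d (Suc k) y"
proof (induction k)
  case 0
  then show ?case using free_resolution_homotopy_base[OF X res r fac] by (simp only: One_nat_def)
next
  case (Suc k)
  let ?F = "free_mod R (n (Suc k))"
  interpret F: module R ?F by (rule module_free_mod)
  obtain \<sigma> where \<sigma>: "\<sigma> \<in> mod_hom R (free_mod R (n k)) ?F"
    and inv: "\<forall>y\<in>carrier ?F. d (Suc k) (\<sigma> (d (Suc k) y)) = r \<odot>\<^bsub>free_mod R (n k)\<^esub> d (Suc k) y"
    using Suc.IH by blast
  obtain \<tau> where \<tau>: "\<tau> \<in> mod_hom R ?F (free_mod R (n (Suc (Suc k))))"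
    and d\<tau>: "\<forall>x\<in>carrier ?F. d (Suc (Suc k)) (\<tau> x) = r \<odot>\<^bsub>?F\<^esub> x \<ominus>\<^bsub>?F\<^esub> \<sigma> (d (Suc k) x)"
    using free_resolution_homotopy_step[OF res r \<sigma> inv] by blast
  have "d (Suc (Suc k)) (\<tau> (d (Suc (Suc k)) y)) = r \<odot>\<^bsub>?F\<^esub> d (Suc (Suc k)) y"
    if y: "y \<in> carrier (free_mod R (n (Suc (Suc k))))" for y
  proof -
    note d2 = free_resolution_d_hom[OF res, of "Suc k"]
    have "\<sigma> (d (Suc k) (d (Suc (Suc k)) y)) = \<zero>\<^bsub>?F\<^esub>"
      using free_resolution_d_d[OF res y] mod_hom_zero[OF module_free_mod module_free_mod \<sigma>] by simp
    then show ?thesis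
      using d\<tau> mod_hom_closed[OF d2 y] r by (simp add: F.minus_eq)
  qed
  then show ?case using \<tau> by blast
qed

lemma scalar_factors_imp_ext_ann:
  assumes X: "module R X" and N: "module R N" and r: "r \<in> carrier R"
    and fac: "factors_through_free R X X (\<lambda>x. r \<odot>\<^bsub>X\<^esub> x)" and i: "0 < i"
  shows "r \<in> ext_ann R X N i"
proof -
  obtain k where k: "i = Suc k" using i gr0_implies_Suc by blast
  have "\<exists>g\<in>mod_hom R (free_mod R (n k)) N. \<forall>x\<in>carrier (free_mod R (n (Suc k))). r \<odot>\<^bsub>N\<^esub> f x = g (d (Suc k) x)"
    if res: "free_resolution R X n \<epsilon> d" and f: "f \<in> mod_hom R (free_mod R (n (Suc k))) N"
      and cocycle: "\<forall>y\<in>carrier (free_mod R (n (Suc (Suc k)))). f (d (Suc (Suc k)) y) = \<zero>\<^bsub>N\<^esub>"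
    for n \<epsilon> d f
  proof -
    let ?F = "free_mod R (n (Suc k))"
    interpret N: module R N by (rule N)
    interpret F: module R ?F by (rule module_free_mod)
    obtain \<sigma> where \<sigma>: "\<sigma> \<in> mod_hom R (free_mod R (n k)) ?F"
      and inv: "\<forall>y\<in>carrier ?F. d (Suc k) (\<sigma> (d (Suc k) y)) = r \<odot>\<^bsub>free_mod R (n k)\<^esub> d (Suc k) y"
      using free_resolution_null_homotopy[OF X res r fac] by blast
    obtain \<tau> where \<tau>: "\<tau> \<in> mod_hom R ?F (free_mod R (n (Suc (Suc k))))"
      and d\<tau>: "\<forall>x\<in>carrier ?F. d (Suc (Suc k)) (\<tau> x) = r \<odot>\<^bsub>?F\<^esub> x \<ominus>\<^bsub>?F\<^esub> \<sigma> (d (Suc k) x)"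
      using free_resolution_homotopy_step[OF res r \<sigma> inv] by blast
    note d1 = free_resolution_d_hom[OF res, of k] and d2 = free_resolution_d_hom[OF res, of "Suc k"]
    have "r \<odot>\<^bsub>N\<^esub> f x = f (\<sigma> (d (Suc k) x))" if x: "x \<in> carrier ?F" for x
    proof -
      have s: "\<sigma> (d (Suc k) x) \<in> carrier ?F" by (rule mod_hom_closed[OF \<sigma> mod_hom_closed[OF d1 x]])
      have t: "\<tau> x \<in> carrier (free_mod R (n (Suc (Suc k))))" by (rule mod_hom_closed[OF \<tau> x])
      have "r \<odot>\<^bsub>?F\<^esub> x = d (Suc (Suc k)) (\<tau> x) \<oplus>\<^bsub>?F\<^esub> \<sigma> (d (Suc k) x)"
        using d\<tau> x s r by (simp add: F.minus_eq F.a_assoc F.l_neg)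
      then have "r \<odot>\<^bsub>N\<^esub> f x = f (d (Suc (Suc k)) (\<tau> x)) \<oplus>\<^bsub>N\<^esub> f (\<sigma> (d (Suc k) x))"
        using mod_hom_smult[OF f r x] mod_hom_add[OF f mod_hom_closed[OF d2 t] s] by simp
      then show ?thesis using cocycle t mod_hom_closed[OF f s] by simp
    qed
    then show ?thesis by (intro bexI[of _ "\<lambda>y. f (\<sigma> y)"] ballI mod_hom_comp[OF \<sigma> f])
  qed
  then show ?thesis using r unfolding ext_ann_def k by simp
qed

lemma stable_ann_subset_AR_ann:
  assumes X: "module R X"
  shows "stable_ann R X \<subseteq> AR_ann R X"
proof
  fix r assume "r \<in> stable_ann R X"
  then have r: "r \<in> carrier R" and fac: "factors_through_free R X X (\<lambda>x. r \<odot>\<^bsub>X\<^esub> x)"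
    by (simp_all add: stable_ann_iff_scalar_factors)
  have "module R (dsum X (self_mod R))" by (rule module_dsum[OF X module_self_mod[OF is_cring]])
  then show "r \<in> AR_ann R X"
    using scalar_factors_imp_ext_ann[OF X _ r fac] r unfolding AR_ann_def by blast
qed

lemma ext1_ann_extends:
  assumes X: "module R X" and N: "module R N" and res: "free_resolution R X n \<epsilon> d"
    and r: "r \<in> ext_ann R X N 1"
    and \<psi>: "\<psi> \<in> mod_hom R (submod (free_mod R (n 0)) (mod_kernel (free_mod R (n 0)) X \<epsilon>)) N"
  shows "\<exists>g\<in>mod_hom R (free_mod R (n 0)) N. \<forall>u\<in>mod_kernel (free_mod R (n 0)) X \<epsilon>. g u = r \<odot>\<^bsub>N\<^esub> \<psi> u"
proof -
  let ?K = "mod_kernel (free_mod R (n 0)) X \<epsilon>"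
  have eps: "\<epsilon> \<in> mod_hom R (free_mod R (n 0)) X"
    and d1: "d 1 \<in> mod_hom R (free_mod R (n 1)) (free_mod R (n 0))"
    and ker: "?K = d 1 ` carrier (free_mod R (n 1))"
    using res unfolding free_resolution_def by auto
  have d1K: "d 1 \<in> mod_hom R (free_mod R (n 1)) (submod (free_mod R (n 0)) ?K)"
    using ker by (intro mod_hom_into_submod[OF d1]) auto
  have K: "module R (submod (free_mod R (n 0)) ?K)"
    by (rule module_submod[OF module_free_mod mod_kernel_submodule[OF module_free_mod X eps]])
  have ext: "\<exists>g\<in>mod_hom R (free_mod R (n 0)) N. \<forall>x\<in>carrier (free_mod R (n 1)). r \<odot>\<^bsub>N\<^esub> f x = g (d 1 x)"
    if "f \<in> mod_hom R (free_mod R (n 1)) N"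
      "\<forall>y\<in>carrier (free_mod R (n (Suc 1))). f (d (Suc 1) y) = \<zero>\<^bsub>N\<^esub>" for f
    using r res that unfolding ext_ann_def by simp
  have "\<psi> (d 1 (d (Suc 1) y)) = \<zero>\<^bsub>N\<^esub>" if "y \<in> carrier (free_mod R (n (Suc 1)))" for y
    using free_resolution_d_d[OF res, of y 0] that mod_hom_zero[OF K N \<psi>] by simp
  then obtain g where g: "g \<in> mod_hom R (free_mod R (n 0)) N"
    and rg: "\<forall>x\<in>carrier (free_mod R (n 1)). r \<odot>\<^bsub>N\<^esub> \<psi> (d 1 x) = g (d 1 x)"
    using ext[OF mod_hom_comp[OF d1K \<psi>]] by blast
  have "g u = r \<odot>\<^bsub>N\<^esub> \<psi> u" if "u \<in> ?K" for u
    using that ker rg by auto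
  with g show ?thesis by blast
qed

section \<open>The sum of a module and its syzygy\<close>

lemma syzygy_scalar_factors:
  assumes M: "module R M" and \<pi>: "\<pi> \<in> mod_hom R (free_mod R n) M"
    and onto: "\<pi> ` carrier (free_mod R n) = carrier M" and r: "r \<in> carrier R"
    and t: "t \<in> mod_hom R (free_mod R n) (free_mod R n)"
    and tK: "\<forall>u\<in>carrier (free_mod R n). t u \<in> mod_kernel (free_mod R n) M \<pi>"
    and tr: "\<forall>u\<in>mod_kernel (free_mod R n) M \<pi>. t u = r \<odot>\<^bsub>free_mod R n\<^esub> u"
  shows "factors_through_free R M M (\<lambda>x. r \<odot>\<^bsub>M\<^esub> x)"
proof -
  let ?F = "free_mod R n"
  interpret F: module R ?F by (rule module_free_mod)
  interpret M: module R M by (rule M)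
  have \<phi>: "(\<lambda>u. r \<odot>\<^bsub>?F\<^esub> u \<ominus>\<^bsub>?F\<^esub> t u) \<in> mod_hom R ?F ?F"
    by (intro mod_hom_pointwise_diff[OF module_free_mod] mod_hom_scale[OF module_free_mod] mod_hom_id r t)
  have "r \<odot>\<^bsub>?F\<^esub> u \<ominus>\<^bsub>?F\<^esub> t u = \<zero>\<^bsub>?F\<^esub>" if u: "u \<in> carrier ?F" "\<pi> u = \<zero>\<^bsub>M\<^esub>" for u
  proof -
    have "u \<in> mod_kernel ?F M \<pi>" using u by (simp add: mod_kernel_def)
    then have "t u = r \<odot>\<^bsub>?F\<^esub> u" using tr by blast
    then show ?thesis using u(1) r by (simp add: F.minus_eq F.r_neg)
  qed
  from mod_hom_factor_surj[OF module_free_mod M module_free_mod \<pi> onto \<phi> this]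
  obtain s where s: "s \<in> mod_hom R M ?F"
    and s\<pi>: "\<forall>u\<in>carrier ?F. s (\<pi> u) = r \<odot>\<^bsub>?F\<^esub> u \<ominus>\<^bsub>?F\<^esub> t u"
    by blast
  have "\<pi> (s x) = r \<odot>\<^bsub>M\<^esub> x" if "x \<in> carrier M" for x
  proof -
    have "x \<in> \<pi> ` carrier ?F" using that onto by simp
    then obtain u where u: "u \<in> carrier ?F" "x = \<pi> u" by blast
    have "t u \<in> mod_kernel ?F M \<pi>" using tK u(1) by blast
    then have tu: "\<pi> (t u) = \<zero>\<^bsub>M\<^esub>" "t u \<in> carrier ?F" by (simp_all add: mod_kernel_def)
    have ru: "r \<odot>\<^bsub>?F\<^esub> u \<in> carrier ?F" using r u(1) by simp
    have "\<pi> (s x) = \<pi> (r \<odot>\<^bsub>?F\<^esub> u) \<ominus>\<^bsub>M\<^esub> \<pi> (t u)"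
      using s\<pi> u mod_hom_minus[OF module_free_mod M \<pi> ru tu(2)] by simp
    also have "\<dots> = r \<odot>\<^bsub>M\<^esub> x"
      using tu(1) mod_hom_smult[OF \<pi> r u(1)] u(2) r mod_hom_closed[OF \<pi> u(1)] by (simp add: M.minus_eq)
    finally show ?thesis .
  qed
  then show ?thesis unfolding factors_through_free_def
    by (intro exI[of _ n] exI[of _ s] exI[of _ \<pi>] conjI s \<pi> ballI)
qed

lemma submod_scalar_factors:
  assumes K: "K \<subseteq> carrier (free_mod R n)"
    and t: "t \<in> mod_hom R (free_mod R n) (free_mod R n)"
    and tK: "\<forall>u\<in>carrier (free_mod R n). t u \<in> K" and tr: "\<forall>u\<in>K. t u = r \<odot>\<^bsub>free_mod R n\<^esub> u"
  shows "factors_through_free R (submod (free_mod R n) K) (submod (free_mod R n) K)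
    (\<lambda>x. r \<odot>\<^bsub>submod (free_mod R n) K\<^esub> x)"
  unfolding factors_through_free_def
proof (intro exI conjI)
  show "(\<lambda>x. x) \<in> mod_hom R (submod (free_mod R n) K) (free_mod R n)"
    by (rule mod_hom_restrict_submod[OF mod_hom_id K])
  show "t \<in> mod_hom R (free_mod R n) (submod (free_mod R n) K)"
    using tK by (intro mod_hom_into_submod[OF t]) auto
qed (use tr in simp)

lemma dsum_scalar_factors:
  assumes A: "factors_through_free R A A (\<lambda>x. r \<odot>\<^bsub>A\<^esub> x)"
    and B: "factors_through_free R B B (\<lambda>x. r \<odot>\<^bsub>B\<^esub> x)"
  shows "factors_through_free R (dsum A B) (dsum A B) (\<lambda>x. r \<odot>\<^bsub>dsum A B\<^esub> x)"
proof -
  obtain k gA hA where gA: "gA \<in> mod_hom R A (free_mod R k)" and hA: "hA \<in> mod_hom R (free_mod R k) A"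
    and hgA: "\<forall>x\<in>carrier A. hA (gA x) = r \<odot>\<^bsub>A\<^esub> x"
    using A unfolding factors_through_free_def by blast
  obtain l gB hB where gB: "gB \<in> mod_hom R B (free_mod R l)" and hB: "hB \<in> mod_hom R (free_mod R l) B"
    and hgB: "\<forall>x\<in>carrier B. hB (gB x) = r \<odot>\<^bsub>B\<^esub> x"
    using B unfolding factors_through_free_def by blast
  have g: "(\<lambda>x. vec_append k (gA (fst x)) (gB (snd x))) \<in> mod_hom R (dsum A B) (free_mod R (k + l))"
    by (intro mod_hom_vec_append mod_hom_comp[OF mod_hom_fst gA] mod_hom_comp[OF mod_hom_snd gB])
  have h: "(\<lambda>w. (hA (vec_take R k w), hB (vec_drop k w))) \<in> mod_hom R (free_mod R (k + l)) (dsum A B)"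
    by (intro mod_hom_pair mod_hom_comp[OF mod_hom_vec_take hA] mod_hom_comp[OF mod_hom_vec_drop hB])
  have "(hA (vec_take R k (vec_append k (gA a) (gB b))), hB (vec_drop k (vec_append k (gA a) (gB b))))
      = r \<odot>\<^bsub>dsum A B\<^esub> (a, b)" if "a \<in> carrier A" "b \<in> carrier B" for a b
    using that hgA hgB mod_hom_closed[OF gA] by (simp add: vec_take_append vec_drop_append)
  then show ?thesis unfolding factors_through_free_def using g h by fastforce
qed

lemma free_mod_cover_dsum:
  assumes f: "f \<in> mod_hom R (free_mod R k) A" and g: "g \<in> mod_hom R (free_mod R l) B"
    and onto_f: "f ` carrier (free_mod R k) = carrier A" and onto_g: "g ` carrier (free_mod R l) = carrier B"
  defines "h \<equiv> \<lambda>w. (f (vec_take R k w), g (vec_drop k w))"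
  shows "h \<in> mod_hom R (free_mod R (k + l)) (dsum A B)"
    and "h ` carrier (free_mod R (k + l)) = carrier (dsum A B)"
proof -
  show h: "h \<in> mod_hom R (free_mod R (k + l)) (dsum A B)"
    unfolding h_def by (intro mod_hom_pair mod_hom_comp[OF mod_hom_vec_take f] mod_hom_comp[OF mod_hom_vec_drop g])
  have "z \<in> h ` carrier (free_mod R (k + l))" if z: "z \<in> carrier (dsum A B)" for z
  proof -
    obtain x y where xy: "z = (x, y)" "x \<in> carrier A" "y \<in> carrier B" using z by (cases z) auto
    then have "x \<in> f ` carrier (free_mod R k)" "y \<in> g ` carrier (free_mod R l)"
      using onto_f onto_g by simp_all
    then obtain u v where "u \<in> carrier (free_mod R k)" "v \<in> carrier (free_mod R l)" "z = (f u, g v)"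
      using xy(1) by blast
    then show ?thesis
      using vec_append_closed by (auto simp: h_def vec_take_append vec_drop_append intro!: image_eqI)
  qed
  then show "h ` carrier (free_mod R (k + l)) = carrier (dsum A B)"
    using mod_hom_closed[OF h] by blast
qed

lemma syzygy_sum_cover:
  assumes noeth: "noetherian_ring R" and M: "module R M"
    and \<pi>: "\<pi> \<in> mod_hom R (free_mod R n) M" and onto: "\<pi> ` carrier (free_mod R n) = carrier M"
  defines "K \<equiv> mod_kernel (free_mod R n) M \<pi>"
  defines "X \<equiv> dsum M (submod (free_mod R n) K)"
  shows "\<exists>m \<epsilon>. \<epsilon> \<in> mod_hom R (free_mod R (n + m)) X \<and> \<epsilon> ` carrier (free_mod R (n + m)) = carrier X \<and>
    K \<subseteq> mod_kernel (free_mod R (n + m)) X \<epsilon> \<and>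
    (\<forall>w\<in>mod_kernel (free_mod R (n + m)) X \<epsilon>. vec_take R n w \<in> K)"
proof -
  have Ksub: "submodule K R (free_mod R n)"
    unfolding K_def by (rule mod_kernel_submodule[OF module_free_mod M \<pi>])
  have Kc: "u \<in> K \<longleftrightarrow> u \<in> carrier (free_mod R n) \<and> \<pi> u = \<zero>\<^bsub>M\<^esub>" for u
    by (simp add: K_def mod_kernel_def)
  obtain m \<kappa> where \<kappa>: "\<kappa> \<in> mod_hom R (free_mod R m) (free_mod R n)" and \<kappa>K: "\<kappa> ` carrier (free_mod R m) = K"
    using submodule_free_mod_fin_gen[OF noeth Ksub] by (elim exE conjE)
  have \<kappa>': "\<kappa> \<in> mod_hom R (free_mod R m) (submod (free_mod R n) K)"
    using \<kappa>K by (intro mod_hom_into_submod[OF \<kappa>]) blast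
  define \<epsilon> where "\<epsilon> w = (\<pi> (vec_take R n w), \<kappa> (vec_drop n w))" for w
  have \<epsilon>: "\<epsilon> \<in> mod_hom R (free_mod R (n + m)) X" and onto\<epsilon>: "\<epsilon> ` carrier (free_mod R (n + m)) = carrier X"
    using free_mod_cover_dsum[OF \<pi> \<kappa>' onto] \<kappa>K unfolding \<epsilon>_def X_def by simp_all
  have "u \<in> mod_kernel (free_mod R (n + m)) X \<epsilon>" if u: "u \<in> K" for u
  proof -
    have uc: "u \<in> carrier (free_mod R n)" "\<pi> u = \<zero>\<^bsub>M\<^esub>" using u Kc by auto
    have "vec_drop n u = \<zero>\<^bsub>free_mod R m\<^esub>"
      using uc(1) by (auto simp: vec_drop_def free_mod_carrier free_mod_ops)
    then have "\<kappa> (vec_drop n u) = \<zero>\<^bsub>free_mod R n\<^esub>"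
      using mod_hom_zero[OF module_free_mod module_free_mod \<kappa>] by simp
    then show ?thesis
      using uc free_mod_mono[of n "n + m"] by (auto simp: mod_kernel_def \<epsilon>_def X_def vec_take_id)
  qed
  moreover have "vec_take R n w \<in> K" if "w \<in> mod_kernel (free_mod R (n + m)) X \<epsilon>" for w
    using that mod_hom_closed[OF mod_hom_vec_take] by (auto simp: Kc mod_kernel_def \<epsilon>_def X_def)
  ultimately show ?thesis using \<epsilon> onto\<epsilon> by blast
qed

lemma ext1_ann_syzygy_sum_extension:
  assumes M: "module R M" and K: "submodule K R (free_mod R n)"
  defines "X \<equiv> dsum M (submod (free_mod R n) K)"
  assumes res: "free_resolution R X nn \<epsilon> d" and nn0: "nn 0 = n + m"
    and Kker: "K \<subseteq> mod_kernel (free_mod R (n + m)) X \<epsilon>"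
    and take_ker: "\<forall>w\<in>mod_kernel (free_mod R (n + m)) X \<epsilon>. vec_take R n w \<in> K"
    and r: "r \<in> ext_ann R X (dsum X (self_mod R)) 1"
  shows "\<exists>t\<in>mod_hom R (free_mod R n) (free_mod R n).
    (\<forall>u\<in>carrier (free_mod R n). t u \<in> K) \<and> (\<forall>u\<in>K. t u = r \<odot>\<^bsub>free_mod R n\<^esub> u)"
proof -
  let ?F = "free_mod R (n + m)" and ?N = "dsum X (self_mod R)"
  let ?E = "mod_kernel ?F X \<epsilon>"
  have Kc: "K \<subseteq> carrier (free_mod R n)" using subgroup.subset[OF submodule.axioms(1)[OF K]] by simp
  have X: "module R X" unfolding X_def by (rule module_dsum[OF M module_submod[OF module_free_mod K]])
  have N: "module R ?N" by (rule module_dsum[OF X module_self_mod[OF is_cring]])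
  define \<psi> where "\<psi> w = ((\<zero>\<^bsub>M\<^esub>, vec_take R n w), \<zero>\<^bsub>self_mod R\<^esub>)" for w
  have take: "vec_take R n \<in> mod_hom R (submod ?F ?E) (submod (free_mod R n) K)"
    using take_ker by (intro mod_hom_into_submod mod_hom_restrict_submod[OF mod_hom_vec_take])
      (auto simp: mod_kernel_def)
  have \<psi>: "\<psi> \<in> mod_hom R (submod ?F ?E) ?N"
    unfolding \<psi>_def X_def
    by (intro mod_hom_pair take[unfolded X_def] mod_hom_const_zero M module_self_mod is_cring)
  obtain g where g: "g \<in> mod_hom R ?F ?N" and gE: "\<forall>u\<in>?E. g u = r \<odot>\<^bsub>?N\<^esub> \<psi> u"
    using ext1_ann_extends[OF X N res r] \<psi> nn0 by auto
  define t where "t u = snd (fst (g u))" for u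
  have g_n: "g \<in> mod_hom R (free_mod R n) ?N"
    using mod_hom_comp[OF mod_hom_free_mod_incl g] by simp
  have snd_X: "snd \<in> mod_hom R X (submod (free_mod R n) K)"
    unfolding X_def by (rule mod_hom_snd)
  have t: "t \<in> mod_hom R (free_mod R n) (free_mod R n)"
    unfolding t_def using mod_hom_comp[OF mod_hom_comp[OF mod_hom_comp[OF g_n mod_hom_fst] snd_X]
      mod_hom_restrict_submod[OF mod_hom_id Kc]] .
  have "t u \<in> K" if "u \<in> carrier (free_mod R n)" for u
    using mod_hom_closed[OF g_n that] by (auto simp: t_def X_def mem_Times_iff)
  moreover have "t u = r \<odot>\<^bsub>free_mod R n\<^esub> u" if u: "u \<in> K" for u
  proof -
    have "u \<in> ?E" "u \<in> carrier (free_mod R n)" using Kker Kc u by auto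
    then show ?thesis using gE by (simp add: t_def \<psi>_def vec_take_id X_def)
  qed
  ultimately show ?thesis using t by blast
qed

lemma AR_ann_syzygy_sum_subset_stable_ann:
  assumes noeth: "noetherian_ring R" and M: "module R M"
    and \<pi>: "\<pi> \<in> mod_hom R (free_mod R n) M" and onto: "\<pi> ` carrier (free_mod R n) = carrier M"
  defines "K \<equiv> mod_kernel (free_mod R n) M \<pi>"
  defines "X \<equiv> dsum M (submod (free_mod R n) K)"
  shows "AR_ann R X \<subseteq> stable_ann R X"
proof
  have K: "submodule K R (free_mod R n)"
    unfolding K_def by (rule mod_kernel_submodule[OF module_free_mod M \<pi>])
  have X: "module R X" unfolding X_def by (rule module_dsum[OF M module_submod[OF module_free_mod K]])
  obtain m \<epsilon> where \<epsilon>: "\<epsilon> \<in> mod_hom R (free_mod R (n + m)) X" "\<epsilon> ` carrier (free_mod R (n + m)) = carrier X"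
    and Kker: "K \<subseteq> mod_kernel (free_mod R (n + m)) X \<epsilon>"
    and take_ker: "\<forall>w\<in>mod_kernel (free_mod R (n + m)) X \<epsilon>. vec_take R n w \<in> K"
    using syzygy_sum_cover[OF noeth M \<pi> onto] unfolding X_def K_def by (elim exE conjE)
  obtain nn d where nn0: "nn 0 = n + m" and res: "free_resolution R X nn \<epsilon> d"
    using free_resolution_exists[OF noeth X \<epsilon>] by (elim exE conjE)
  fix r assume "r \<in> AR_ann R X"
  then have r: "r \<in> carrier R" and "r \<in> ext_ann R X (dsum X (self_mod R)) 1"
    by (auto simp: AR_ann_def)
  then obtain t where "t \<in> mod_hom R (free_mod R n) (free_mod R n)"
    "\<forall>u\<in>carrier (free_mod R n). t u \<in> K" "\<forall>u\<in>K. t u = r \<odot>\<^bsub>free_mod R n\<^esub> u"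
    using ext1_ann_syzygy_sum_extension[OF M K res[unfolded X_def] nn0 Kker[unfolded X_def]]
      take_ker unfolding X_def by blast
  then have "factors_through_free R X X (\<lambda>x. r \<odot>\<^bsub>X\<^esub> x)"
    unfolding X_def using K_def subgroup.subset[OF submodule.axioms(1)[OF K]]
    by (intro dsum_scalar_factors syzygy_scalar_factors[OF M \<pi> onto r] submod_scalar_factors) auto
  then show "r \<in> stable_ann R X" using r by (simp add: stable_ann_iff_scalar_factors)
qed

end

theorem mainTheorem16:
  fixes R :: "'a ring" and M :: "('a, 'b) module" and n :: nat
    and \<pi> :: "(nat \<Rightarrow> 'a) \<Rightarrow> 'b"
  assumes "noetherian_ring R" and "local_ring R" and "module R M"
    and "\<pi> \<in> mod_hom R (free_mod R n) M"
    and "\<pi> ` carrier (free_mod R n) = carrier M"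
  shows "stable_ann R (dsum M (submod (free_mod R n) (mod_kernel (free_mod R n) M \<pi>)))
       = AR_ann R (dsum M (submod (free_mod R n) (mod_kernel (free_mod R n) M \<pi>)))"
proof -
  interpret plain_cring R using assms(1) by (simp add: noetherian_ring_def plain_cring_def)
  have "module R (dsum M (submod (free_mod R n) (mod_kernel (free_mod R n) M \<pi>)))"
    using assms(3,4) by (intro module_dsum module_submod module_free_mod mod_kernel_submodule)
  then show ?thesis
    using stable_ann_subset_AR_ann AR_ann_syzygy_sum_subset_stable_ann[OF assms(1,3-5)] by blast
qed

end
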